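(* Let $\Delta$ be an $(n-1)$-dimensional simplicial complex with symmetric $h$-vector $h(\Delta)=(h_0,\dots,h_n)$ (i.e. $h_i=h_{n-i}$). Then for each $r$, $h_r(\mathrm{Int}(\Delta))=\sum_{j=0}^{\lfloor n/2\rfloor}h_j\,[t^r]\,\mathbb{B}^+_{n+1,j+1}(t)$, i.e. $$h(\mathrm{Int}(\Delta),t)=\sum_{j=0}^{\lfloor n/2\rfloor}h_j\,\mathbb{B}^+_{n+1,j+1}(t),$$ and in terms of $\gamma$-vectors, $\gamma(\mathrm{Int}(\Delta))=\sum_{j=0}^{\lfloor n/2\rfloor}h_j\,\gamma^{(n+1,j+1)}$.
   Context: For a $(d-1)$-dimensional complex with $f$-polynomial $f(t)=\sum_{i}f_it^i$ ($f_i$ = number of faces with $i$ vertices), the $h$-polynomial is $h(t)=(1-t)^df(t/(1-t))=\sum h_it^i$; if symmetric, the $\gamma$-vector $(\gamma_0,\dots,\gamma_{\lfloor d/2\rfloor})$ is defined by $h(t)=\sum_i\gamma_it^i(1+t)^{d-2i}$. $\mathrm{Int}(\Delta)$ is the order complex of the poset $\{[A,B]:\emptyset\ne A\subseteq B\in\Delta\}$ with $[A,B]\le[A',B']$ iff $A'\subseteq A\subseteq B\subseteq B'$ (it has dimension $n-1$). $B_N$ is the group of signed permutations $\sigma=\sigma_1\cdots\sigma_N$ of $\{\pm1,\dots,\pm N\}$; with $\sigma_0=0$, $\mathrm{des}_B(\sigma)=|\{i\in\{0,\dots,N-1\}:\sigma_i>\sigma_{i+1}\}|$. For $1\le j\le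 N$, $B^+_{N,j}(t)=\sum t^{\mathrm{des}_B(\sigma)}$ over $\sigma\in B_N$ with $\sigma_N>0$, $\sigma_1=j$; $\mathbb{B}^+_{N,j}=B^+_{N,j}+B^+_{N,N-j+1}$ if $j\ne(N+1)/2$ and $\mathbb{B}^+_{N,j}=B^+_{N,j}$ if $j=(N+1)/2$. $\gamma^{(N,j)}$ is the unique vector $(\gamma_0,\dots,\gamma_{\lfloor (N-1)/2\rfloor})$ with $\mathbb{B}^+_{N,j}(t)=\sum_k\gamma_kt^k(1+t)^{N-1-2k}$. $[t^r]P$ denotes the coefficient of $t^r$ in $P$. *)

theory Defs
  imports "HOL-Computational_Algebra.Polynomial"
begin

definition simplicial_complex :: "'a set set \<Rightarrow> bool" where
  "simplicial_complex K \<longleftrightarrow> finite K \<and> {} \<in> K \<and> (\<forall>F\<in>K. finite F) \<and>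
     (\<forall>F\<in>K. \<forall>G. G \<subseteq> F \<longrightarrow> G \<in> K)"

definition f_poly :: "'a set set \<Rightarrow> int poly" where
  "f_poly K = (\<Sum>F\<in>K. monom 1 (card F))"

(* h-polynomial h(t) = (1-t)^d f(t/(1-t)) = sum_F t^|F| (1-t)^(d-|F|),
   where d = dimension + 1 = maximal face cardinality. *)
definition h_poly :: "nat \<Rightarrow> 'a set set \<Rightarrow> int poly" where
  "h_poly d K = (\<Sum>F\<in>K. monom 1 (card F) * [:1, -1:] ^ (d - card F))"

definition int_poset :: "'a set set \<Rightarrow> ('a set \<times> 'a set) set" where
  "int_poset K = {(A, B). A \<noteq> {} \<and> A \<subseteq> B \<and> B \<in> K}"

definition int_le :: "('a set \<times> 'a set) \<Rightarrow> ('a set \<times> 'a set) \<Rightarrow> bool" where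
  "int_le p q \<longleftrightarrow> fst q \<subseteq> fst p \<and> snd p \<subseteq> snd q"

definition order_complex :: "'b set \<Rightarrow> ('b \<Rightarrow> 'b \<Rightarrow> bool) \<Rightarrow> 'b set set" where
  "order_complex P le = {C. C \<subseteq> P \<and> finite C \<and> (\<forall>x\<in>C. \<forall>y\<in>C. le x y \<or> le y x)}"

definition Int_complex :: "'a set set \<Rightarrow> ('a set \<times> 'a set) set set" where
  "Int_complex K = order_complex (int_poset K) int_le"

(* signed permutations of {1..N}: sigma i for i in {1..N}, sigma i = 0 elsewhere
   (so sigma 0 = 0), |sigma| a permutation of {1..N} *)
definition signed_perms :: "nat \<Rightarrow> (nat \<Rightarrow> int) set" where
  "signed_perms N = {\<sigma>. (\<forall>i. i \<notin> {1..N} \<longrightarrow> \<sigma> i = 0) \<and>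
       bij_betw (\<lambda>i. nat \<bar>\<sigma> i\<bar>) {1..N} {1..N}}"

definition desB :: "nat \<Rightarrow> (nat \<Rightarrow> int) \<Rightarrow> nat" where
  "desB N \<sigma> = card {i \<in> {0..<N}. \<sigma> i > \<sigma> (Suc i)}"

definition Bplus :: "nat \<Rightarrow> nat \<Rightarrow> int poly" where
  "Bplus N j = (\<Sum>\<sigma>\<in>{\<sigma> \<in> signed_perms N. \<sigma> N > 0 \<and> \<sigma> 1 = int j}. monom 1 (desB N \<sigma>))"

definition BBplus :: "nat \<Rightarrow> nat \<Rightarrow> int poly" where
  "BBplus N j = (if 2 * j \<noteq> N + 1 then Bplus N j + Bplus N (N - j + 1) else Bplus N j)"

definition gamma_vec :: "nat \<Rightarrow> int poly \<Rightarrow> nat \<Rightarrow> int" where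
  "gamma_vec d p = (THE g. (\<forall>i > d div 2. g i = 0) \<and>
      p = (\<Sum>i\<le>d div 2. smult (g i) (monom 1 i * [:1, 1:] ^ (d - 2 * i))))"

end

(*
  Both sides are compared as power series after division by (1 - t)^n. With Y = t/(1 - t), an
  h-polynomial divided by (1 - t)^n is the sum of Y^|F| over the faces F, and classifying the chains
  of Int(K) by their top interval [A, B] shows that the coefficient of t^q for Int(K) is
  sum_B ((2q)^|B| - (2q - 1)^|B|). On the other side, deleting the first letter of a signed
  permutation gives a recursion for B^+_{N,j}, which has to be carried along for negative first
  letters as well. It yields the coefficients (2q + 1)^(N-j) (2q)^(j-1) - (2q)^(N-j) (2q - 1)^(j-1)
  of B^+_{N,j}/(1 - t)^(N-1), and weighting them by h_j produces the same sum, now written as the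
  homogenised h-polynomial sum_j h_j x^j (x + 1)^(n-j) at x = 2q and x = 2q - 1.
  The same recursion shows that B^+_{N,j} and B^+_{N,N+1-j} are mirror images of each other, so for
  symmetric h the sum folds into the BB^+_{N,j}, which are palindromic; gamma-vectors of palindromic
  polynomials are linear.
*)
theory Submission
  imports Defs "HOL-Library.FuncSet" "HOL-Computational_Algebra.Polynomial_FPS"
begin

unbundle fps_syntax

section \<open>Signed permutations by their first letter\<close>

lemma signed_perms_outside: "\<sigma> \<in> signed_perms N \<Longrightarrow> k \<notin> {1..N} \<Longrightarrow> \<sigma> k = 0"
  by (auto simp: signed_perms_def)

lemma signed_perms_abs_range:
  assumes "\<sigma> \<in> signed_perms N" "k \<in> {1..N}"
  shows "1 \<le> \<bar>\<sigma> k\<bar> \<and> \<bar>\<sigma> k\<bar> \<le> int N"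
proof -
  have "nat \<bar>\<sigma> k\<bar> \<in> {1..N}" using assms unfolding signed_perms_def bij_betw_def by auto
  then show ?thesis by auto
qed

lemma signed_perms_abs_inj:
  assumes "\<sigma> \<in> signed_perms N" "k \<in> {1..N}" "k' \<in> {1..N}" "\<bar>\<sigma> k\<bar> = \<bar>\<sigma> k'\<bar>"
  shows "k = k'"
proof -
  have "inj_on (\<lambda>i. nat \<bar>\<sigma> i\<bar>) {1..N}"
    using assms(1) unfolding signed_perms_def bij_betw_def by auto
  then show ?thesis using assms(2-4) by (metis inj_onD)
qed

lemma signed_permsI:
  assumes "\<And>k. k \<notin> {1..N} \<Longrightarrow> \<sigma> k = 0"
    and "\<And>k. k \<in> {1..N} \<Longrightarrow> 1 \<le> \<bar>\<sigma> k\<bar> \<and> \<bar>\<sigma> k\<bar> \<le> int N"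
    and "\<And>k k'. k \<in> {1..N} \<Longrightarrow> k' \<in> {1..N} \<Longrightarrow> \<bar>\<sigma> k\<bar> = \<bar>\<sigma> k'\<bar> \<Longrightarrow> k = k'"
  shows "\<sigma> \<in> signed_perms N"
proof -
  let ?f = "\<lambda>i. nat \<bar>\<sigma> i\<bar>"
  have inj: "inj_on ?f {1..N}"
    by (rule inj_onI) (use assms(2,3) in \<open>metis abs_ge_zero nat_eq_iff2\<close>)
  moreover have "?f ` {1..N} \<subseteq> {1..N}" using assms(2) by fastforce
  ultimately have "?f ` {1..N} = {1..N}"
    by (simp add: card_image card_subset_eq)
  then show ?thesis using inj assms(1) by (simp add: signed_perms_def bij_betw_def)
qed

lemma finite_signed_perms: "finite (signed_perms N)"
proof -
  let ?ext = "\<lambda>f::nat \<Rightarrow> int. \<lambda>k. if k \<in> {1..N} then f k else 0"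
  have "signed_perms N \<subseteq> ?ext ` (PiE {1..N} (\<lambda>_. {- int N..int N}))"
  proof
    fix \<sigma> assume \<sigma>: "\<sigma> \<in> signed_perms N"
    have "\<sigma> = ?ext (restrict \<sigma> {1..N})"
      using signed_perms_outside[OF \<sigma>] by (auto simp: fun_eq_iff)
    moreover have "restrict \<sigma> {1..N} \<in> PiE {1..N} (\<lambda>_. {- int N..int N})"
      using signed_perms_abs_range[OF \<sigma>] by (force simp: abs_le_iff)
    ultimately show "\<sigma> \<in> ?ext ` (PiE {1..N} (\<lambda>_. {- int N..int N}))" by blast
  qed
  then show ?thesis by (rule finite_subset) (simp add: finite_PiE)
qed

lemma desB_eq_sum: "desB N \<sigma> = (\<Sum>i<N. if \<sigma> (Suc i) < \<sigma> i then 1 else 0)"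
  unfolding desB_def by (simp add: sum.If_cases lessThan_atLeast0 Int_def)

text \<open>Deleting the first letter \<open>j\<close> of a signed permutation and standardising the remaining
  letters (closing the gap at absolute value \<open>\<bar>j\<bar>\<close>) is inverted by \<open>open_gap j\<close>.\<close>

definition open_gap :: "int \<Rightarrow> int \<Rightarrow> int" where
  "open_gap j v = (if \<bar>v\<bar> \<ge> \<bar>j\<bar> then v + sgn v else v)"

definition close_gap :: "int \<Rightarrow> int \<Rightarrow> int" where
  "close_gap j v = (if \<bar>v\<bar> > \<bar>j\<bar> then v - sgn v else v)"

lemma open_gap_less_iff: "\<bar>j\<bar> \<ge> 1 \<Longrightarrow> open_gap j a < open_gap j b \<longleftrightarrow> a < b"
  unfolding open_gap_def by (auto simp: sgn_if)

lemma abs_open_gap: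
  "\<bar>j\<bar> \<ge> 1 \<Longrightarrow> \<bar>open_gap j v\<bar> = (if \<bar>v\<bar> \<ge> \<bar>j\<bar> \<and> v \<noteq> 0 then \<bar>v\<bar> + 1 else \<bar>v\<bar>)"
  unfolding open_gap_def by (auto simp: sgn_if)

lemma abs_close_gap: "\<bar>close_gap j v\<bar> = (if \<bar>v\<bar> > \<bar>j\<bar> then \<bar>v\<bar> - 1 else \<bar>v\<bar>)"
  unfolding close_gap_def by (auto simp: sgn_if)

lemma open_gap_close_gap: "\<bar>j\<bar> \<ge> 1 \<Longrightarrow> \<bar>v\<bar> \<noteq> \<bar>j\<bar> \<Longrightarrow> open_gap j (close_gap j v) = v"
  unfolding open_gap_def close_gap_def by (auto simp: sgn_if)

lemma close_gap_open_gap: "\<bar>j\<bar> \<ge> 1 \<Longrightarrow> close_gap j (open_gap j v) = v"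
  unfolding open_gap_def close_gap_def by (auto simp: sgn_if)

lemma sgn_open_gap: "sgn (open_gap j v) = sgn v"
  unfolding open_gap_def by (auto simp: sgn_if)

lemma sgn_close_gap: "\<bar>j\<bar> \<ge> 1 \<Longrightarrow> sgn (close_gap j v) = sgn v"
  unfolding close_gap_def by (auto simp: sgn_if)

definition first_letter_perms :: "nat \<Rightarrow> int \<Rightarrow> (nat \<Rightarrow> int) set" where
  "first_letter_perms N j = {\<sigma> \<in> signed_perms N. \<sigma> N > 0 \<and> \<sigma> 1 = j}"

definition pos_last_perms :: "nat \<Rightarrow> (nat \<Rightarrow> int) set" where
  "pos_last_perms N = {\<tau> \<in> signed_perms N. \<tau> N > 0}"

text \<open>\<open>Bfirst N j\<close> extends \<open>Bplus\<close> to negative first letters, which the recursion needs.\<close>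

definition Bfirst :: "nat \<Rightarrow> int \<Rightarrow> int poly" where
  "Bfirst N j = (\<Sum>\<sigma>\<in>first_letter_perms N j. monom 1 (desB N \<sigma>))"

lemma Bplus_eq_Bfirst: "Bplus N j = Bfirst N (int j)"
  unfolding Bplus_def Bfirst_def first_letter_perms_def by simp

definition prepend_letter :: "nat \<Rightarrow> int \<Rightarrow> (nat \<Rightarrow> int) \<Rightarrow> nat \<Rightarrow> int" where
  "prepend_letter N j \<tau> k =
     (if k = 1 then j else if 2 \<le> k \<and> k \<le> Suc N then open_gap j (\<tau> (k - 1)) else 0)"

definition drop_first_letter :: "nat \<Rightarrow> int \<Rightarrow> (nat \<Rightarrow> int) \<Rightarrow> nat \<Rightarrow> int" where
  "drop_first_letter N j \<sigma> k = (if 1 \<le> k \<and> k \<le> N then close_gap j (\<sigma> (Suc k)) else 0)"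

lemma prepend_letter_signed_perms:
  assumes \<tau>_perm: "\<tau> \<in> signed_perms M" and j: "1 \<le> \<bar>j\<bar>" "\<bar>j\<bar> \<le> int (Suc M)"
  shows "prepend_letter M j \<tau> \<in> signed_perms (Suc M)"
proof -
  let ?\<sigma> = "prepend_letter M j \<tau>"
  have tail: "?\<sigma> k = open_gap j (\<tau> (k - 1))" "k - 1 \<in> {1..M}" if "k \<in> {2..Suc M}" for k
    using that by (auto simp: prepend_letter_def)
  have abs_tail: "\<bar>?\<sigma> k\<bar> = (if \<bar>\<tau> (k - 1)\<bar> \<ge> \<bar>j\<bar> then \<bar>\<tau> (k - 1)\<bar> + 1 else \<bar>\<tau> (k - 1)\<bar>)"
    "1 \<le> \<bar>\<tau> (k - 1)\<bar>" "\<bar>\<tau> (k - 1)\<bar> \<le> int M" if "k \<in> {2..Suc M}" for k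
  proof -
    have "1 \<le> \<bar>\<tau> (k - 1)\<bar> \<and> \<bar>\<tau> (k - 1)\<bar> \<le> int M"
      using signed_perms_abs_range[OF \<tau>_perm tail(2)[OF that]] .
    then show "\<bar>?\<sigma> k\<bar> = (if \<bar>\<tau> (k - 1)\<bar> \<ge> \<bar>j\<bar> then \<bar>\<tau> (k - 1)\<bar> + 1 else \<bar>\<tau> (k - 1)\<bar>)"
      "1 \<le> \<bar>\<tau> (k - 1)\<bar>" "\<bar>\<tau> (k - 1)\<bar> \<le> int M"
      unfolding tail(1)[OF that] abs_open_gap[OF j(1)] by auto
  qed
  show ?thesis
  proof (rule signed_permsI)
    fix k assume "k \<in> {1..Suc M}"
    then show "1 \<le> \<bar>?\<sigma> k\<bar> \<and> \<bar>?\<sigma> k\<bar> \<le> int (Suc M)"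
      using j abs_tail[of k] by (cases "k = 1") (auto simp: prepend_letter_def)
  next
    fix k k' assume k: "k \<in> {1..Suc M}" and k': "k' \<in> {1..Suc M}" and eq: "\<bar>?\<sigma> k\<bar> = \<bar>?\<sigma> k'\<bar>"
    have off: "\<bar>?\<sigma> i\<bar> \<noteq> \<bar>?\<sigma> 1\<bar>" if "i \<in> {2..Suc M}" for i
      using abs_tail(1)[OF that] by (simp add: prepend_letter_def)
    have "k = 1 \<longleftrightarrow> k' = 1"
    proof
      assume "k = 1" then show "k' = 1" using off[of k'] eq k' by fastforce
    next
      assume "k' = 1" then show "k = 1" using off[of k] eq k by fastforce
    qed
    moreover have "k = k'" if "k \<in> {2..Suc M}" "k' \<in> {2..Suc M}"
    proof -
      have "\<bar>\<tau> (k - 1)\<bar> = \<bar>\<tau> (k' - 1)\<bar>"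
        using eq abs_tail[OF that(1)] abs_tail[OF that(2)] by (auto split: if_splits)
      then have "k - 1 = k' - 1"
        by (rule signed_perms_abs_inj[OF \<tau>_perm tail(2)[OF that(1)] tail(2)[OF that(2)]])
      then show ?thesis using that by auto
    qed
    ultimately show "k = k'" using k k' by (cases "k = 1") auto
  qed (auto simp: prepend_letter_def)
qed

lemma prepend_letter_in:
  assumes \<tau>: "\<tau> \<in> pos_last_perms M" and M: "M \<ge> 1" and j: "1 \<le> \<bar>j\<bar>" "\<bar>j\<bar> \<le> int (Suc M)"
  shows "prepend_letter M j \<tau> \<in> first_letter_perms (Suc M) j"
proof -
  have \<tau>_perm: "\<tau> \<in> signed_perms M" and \<tau>_last: "\<tau> M > 0"
    using \<tau> by (auto simp: pos_last_perms_def)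
  have "prepend_letter M j \<tau> (Suc M) > 0"
    using M sgn_open_gap[of j "\<tau> M"] \<tau>_last by (auto simp: prepend_letter_def sgn_1_pos)
  then show ?thesis
    using prepend_letter_signed_perms[OF \<tau>_perm j] by (simp add: first_letter_perms_def prepend_letter_def)
qed

lemma drop_first_letter_in:
  assumes \<sigma>: "\<sigma> \<in> first_letter_perms (Suc M) j" and M: "M \<ge> 1"
  shows "drop_first_letter M j \<sigma> \<in> pos_last_perms M"
proof -
  have \<sigma>_perm: "\<sigma> \<in> signed_perms (Suc M)" and \<sigma>_last: "\<sigma> (Suc M) > 0" and \<sigma>_first: "\<sigma> 1 = j"
    using \<sigma> by (auto simp: first_letter_perms_def)
  have j: "1 \<le> \<bar>j\<bar>" "\<bar>j\<bar> \<le> int (Suc M)"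
    using signed_perms_abs_range[OF \<sigma>_perm, of 1] \<sigma>_first by auto
  have range: "1 \<le> \<bar>\<sigma> (Suc k)\<bar>" "\<bar>\<sigma> (Suc k)\<bar> \<le> int (Suc M)" "\<bar>\<sigma> (Suc k)\<bar> \<noteq> \<bar>j\<bar>"
    if "k \<in> {1..M}" for k
    using signed_perms_abs_range[OF \<sigma>_perm, of "Suc k"] signed_perms_abs_inj[OF \<sigma>_perm, of "Suc k" 1]
      that \<sigma>_first by auto
  have "drop_first_letter M j \<sigma> \<in> signed_perms M"
  proof (rule signed_permsI)
    fix k assume "k \<in> {1..M}"
    then show "1 \<le> \<bar>drop_first_letter M j \<sigma> k\<bar> \<and> \<bar>drop_first_letter M j \<sigma> k\<bar> \<le> int M"
      using range[of k] j by (auto simp: drop_first_letter_def abs_close_gap)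
  next
    fix k k' assume k: "k \<in> {1..M}" and k': "k' \<in> {1..M}"
      and eq: "\<bar>drop_first_letter M j \<sigma> k\<bar> = \<bar>drop_first_letter M j \<sigma> k'\<bar>"
    have "\<bar>\<sigma> (Suc k)\<bar> = \<bar>\<sigma> (Suc k')\<bar>"
      using eq k k' range[OF k] range[OF k'] by (auto simp: drop_first_letter_def abs_close_gap split: if_splits)
    then show "k = k'" using signed_perms_abs_inj[OF \<sigma>_perm, of "Suc k" "Suc k'"] k k' by auto
  qed (auto simp: drop_first_letter_def)
  moreover have "drop_first_letter M j \<sigma> M > 0"
    using M \<sigma>_last sgn_close_gap[OF j(1), of "\<sigma> (Suc M)"] by (simp add: drop_first_letter_def sgn_1_pos)
  ultimately show ?thesis by (simp add: pos_last_perms_def)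
qed

lemma prepend_drop_first_letter:
  assumes \<sigma>: "\<sigma> \<in> first_letter_perms (Suc M) j"
  shows "prepend_letter M j (drop_first_letter M j \<sigma>) = \<sigma>"
proof
  fix k
  have \<sigma>_perm: "\<sigma> \<in> signed_perms (Suc M)" and \<sigma>_first: "\<sigma> 1 = j"
    using \<sigma> by (auto simp: first_letter_perms_def)
  have j: "1 \<le> \<bar>j\<bar>" using signed_perms_abs_range[OF \<sigma>_perm, of 1] \<sigma>_first by auto
  consider "k = 1" | "k \<in> {2..Suc M}" | "k \<notin> {1..Suc M}" by force
  then show "prepend_letter M j (drop_first_letter M j \<sigma>) k = \<sigma> k"
  proof cases
    case 2
    then have "\<bar>\<sigma> k\<bar> \<noteq> \<bar>j\<bar>" using signed_perms_abs_inj[OF \<sigma>_perm, of k 1] \<sigma>_first by auto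
    then show ?thesis
      using 2 j by (auto simp: prepend_letter_def drop_first_letter_def open_gap_close_gap)
  qed (use \<sigma>_first signed_perms_outside[OF \<sigma>_perm] in \<open>auto simp: prepend_letter_def\<close>)
qed

lemma drop_first_prepend_letter:
  assumes "\<tau> \<in> pos_last_perms M" and "1 \<le> \<bar>j\<bar>"
  shows "drop_first_letter M j (prepend_letter M j \<tau>) = \<tau>"
  using assms signed_perms_outside[of \<tau> M]
  by (auto simp: fun_eq_iff pos_last_perms_def drop_first_letter_def prepend_letter_def close_gap_open_gap)

lemma bij_betw_prepend_letter:
  assumes "M \<ge> 1" and "1 \<le> \<bar>j\<bar>" "\<bar>j\<bar> \<le> int (Suc M)"
  shows "bij_betw (prepend_letter M j) (pos_last_perms M) (first_letter_perms (Suc M) j)"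
  by (rule bij_betw_byWitness[where f' = "drop_first_letter M j"])
    (use assms prepend_letter_in drop_first_letter_in drop_first_prepend_letter
        prepend_drop_first_letter in blast)+

text \<open>Descents created at positions \<open>0\<close> and \<open>1\<close> when \<open>j\<close> is prepended to a word starting with
  \<open>i\<close>, minus the descent at position \<open>0\<close> that the old word had.\<close>

definition new_descents :: "int \<Rightarrow> int \<Rightarrow> nat" where
  "new_descents j i =
     (if j > 0 then (if 0 < i \<and> i < j then 1 else 0) else (if 0 < i \<or> i \<le> j then 1 else 0))"

lemma desB_prepend_letter:
  assumes \<tau>: "\<tau> \<in> pos_last_perms M" and M: "M \<ge> 1" and j: "1 \<le> \<bar>j\<bar>"
  shows "desB (Suc M) (prepend_letter M j \<tau>) = new_descents j (\<tau> 1) + desB M \<tau>"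
proof -
  have \<tau>_perm: "\<tau> \<in> signed_perms M" using \<tau> by (auto simp: pos_last_perms_def)
  obtain L where L: "M = Suc L" using M by (cases M) auto
  let ?\<sigma> = "prepend_letter M j \<tau>"
  let ?tail = "\<Sum>i<L. if \<tau> (Suc (Suc i)) < \<tau> (Suc i) then 1 else 0 :: nat"
  have \<tau>0: "\<tau> 0 = 0" using signed_perms_outside[OF \<tau>_perm, of 0] by simp
  have \<tau>1: "\<tau> 1 \<noteq> 0" using signed_perms_abs_range[OF \<tau>_perm, of 1] M by auto
  have "(\<Sum>i<L. if ?\<sigma> (Suc (Suc (Suc i))) < ?\<sigma> (Suc (Suc i)) then 1 else 0) = ?tail"
    using L by (intro sum.cong) (auto simp: prepend_letter_def open_gap_less_iff[OF j])
  then have "desB (Suc M) ?\<sigma> =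
      (if j < 0 then 1 else 0) + (if open_gap j (\<tau> 1) < j then 1 else 0) + ?tail"
    unfolding desB_eq_sum L sum.lessThan_Suc_shift by (simp add: prepend_letter_def numeral_2_eq_2)
  moreover have "desB M \<tau> = (if \<tau> 1 < 0 then 1 else 0) + ?tail"
    unfolding desB_eq_sum L sum.lessThan_Suc_shift by (simp add: \<tau>0)
  moreover have "(if j < 0 then 1 else 0) + (if open_gap j (\<tau> 1) < j then 1 else 0)
      = new_descents j (\<tau> 1) + (if \<tau> 1 < 0 then 1 else (0::nat))"
    using \<tau>1 j unfolding new_descents_def open_gap_def by (auto simp: sgn_if)
  ultimately show ?thesis by simp
qed

lemma Bfirst_Suc:
  assumes M: "M \<ge> 1" and j: "1 \<le> \<bar>j\<bar>" "\<bar>j\<bar> \<le> int (Suc M)"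
  shows "Bfirst (Suc M) j = (\<Sum>i\<in>{- int M..int M} - {0}. monom 1 (new_descents j i) * Bfirst M i)"
proof -
  have first_range: "\<tau> 1 \<in> {- int M..int M} - {0}" if "\<tau> \<in> pos_last_perms M" for \<tau>
    using signed_perms_abs_range[of \<tau> M 1] that M by (auto simp: pos_last_perms_def)
  have "Bfirst (Suc M) j = (\<Sum>\<tau>\<in>pos_last_perms M. monom 1 (desB (Suc M) (prepend_letter M j \<tau>)))"
    unfolding Bfirst_def by (rule sum.reindex_bij_betw[OF bij_betw_prepend_letter[OF M j], symmetric])
  also have "\<dots> = (\<Sum>\<tau>\<in>pos_last_perms M. monom 1 (new_descents j (\<tau> 1)) * monom 1 (desB M \<tau>))"
    by (rule sum.cong) (auto simp: desB_prepend_letter[OF _ M j(1)] mult_monom)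
  also have "\<dots> = (\<Sum>i\<in>{- int M..int M} - {0}. \<Sum>\<tau>\<in>{\<tau> \<in> pos_last_perms M. \<tau> 1 = i}.
      monom 1 (new_descents j (\<tau> 1)) * monom 1 (desB M \<tau>))"
    by (rule sum.group[symmetric]) (use finite_signed_perms first_range in \<open>auto simp: pos_last_perms_def\<close>)
  also have "\<dots> = (\<Sum>i\<in>{- int M..int M} - {0}. monom 1 (new_descents j i) * Bfirst M i)"
    by (intro sum.cong refl)
      (auto simp: Bfirst_def sum_distrib_left pos_last_perms_def first_letter_perms_def intro!: sum.cong)
  finally show ?thesis .
qed

lemma sum_nonzero_int_interval:
  "(\<Sum>i\<in>{- int M..int M} - {0}. f i) = (\<Sum>l=1..M. f (int l)) + (\<Sum>l=1..M. f (- int l))"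
proof -
  have "{- int M..int M} - {0} = int ` {1..M} \<union> (\<lambda>l. - int l) ` {1..M}"
  proof (intro set_eqI iffI)
    fix x assume "x \<in> {- int M..int M} - {0}"
    then have "x = int (nat x) \<and> nat x \<in> {1..M} \<or> x = - int (nat (- x)) \<and> nat (- x) \<in> {1..M}"
      by auto
    then show "x \<in> int ` {1..M} \<union> (\<lambda>l. - int l) ` {1..M}" by blast
  qed auto
  moreover have "int ` {1..M} \<inter> (\<lambda>l. - int l) ` {1..M} = {}" by auto
  ultimately show ?thesis
    by (simp add: sum.union_disjoint sum.reindex inj_on_def)
qed

lemma Bfirst_Suc_pos:
  assumes M: "M \<ge> 1" and j: "1 \<le> j" "j \<le> Suc M"
  shows "Bfirst (Suc M) (int j) = (\<Sum>l=1..M. monom 1 (if l < j then 1 else 0) * Bfirst M (int l))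
     + (\<Sum>l=1..M. Bfirst M (- int l))"
proof -
  have "Bfirst (Suc M) (int j) = (\<Sum>i\<in>{- int M..int M} - {0}. monom 1 (new_descents j i) * Bfirst M i)"
    using Bfirst_Suc[OF M, of "int j"] j by simp
  also have "\<dots> = (\<Sum>l=1..M. monom 1 (new_descents j (int l)) * Bfirst M (int l))
      + (\<Sum>l=1..M. monom 1 (new_descents j (- int l)) * Bfirst M (- int l))"
    by (rule sum_nonzero_int_interval)
  finally show ?thesis
    using j by (simp add: new_descents_def one_pCons)
qed

lemma Bfirst_Suc_neg:
  assumes M: "M \<ge> 1" and k: "1 \<le> k" "k \<le> Suc M"
  shows "Bfirst (Suc M) (- int k) = (\<Sum>l=1..M. monom 1 1 * Bfirst M (int l))
     + (\<Sum>l=1..M. monom 1 (if k \<le> l then 1 else 0) * Bfirst M (- int l))"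
proof -
  have "Bfirst (Suc M) (- int k) = (\<Sum>i\<in>{- int M..int M} - {0}. monom 1 (new_descents (- int k) i) * Bfirst M i)"
    using Bfirst_Suc[OF M, of "- int k"] k by simp
  also have "\<dots> = (\<Sum>l=1..M. monom 1 (new_descents (- int k) (int l)) * Bfirst M (int l))
      + (\<Sum>l=1..M. monom 1 (new_descents (- int k) (- int l)) * Bfirst M (- int l))"
    by (rule sum_nonzero_int_interval)
  finally show ?thesis
    using k by (simp add: new_descents_def)
qed

lemma Bfirst_1_1: "Bfirst 1 1 = 1"
proof -
  have "first_letter_perms 1 1 = {\<lambda>k. if k = 1 then 1 else 0}"
  proof (intro equalityI subsetI)
    fix \<sigma> assume "\<sigma> \<in> first_letter_perms 1 1"
    then show "\<sigma> \<in> {\<lambda>k. if k = 1 then 1 else 0}"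
      using signed_perms_outside[of \<sigma> 1] by (auto simp: first_letter_perms_def fun_eq_iff)
  next
    have "(\<lambda>k. if k = 1 then 1 else 0::int) \<in> signed_perms 1" by (rule signed_permsI) auto
    then show "\<sigma> \<in> first_letter_perms 1 1" if "\<sigma> \<in> {\<lambda>k. if k = 1 then 1 else 0}" for \<sigma>
      using that by (auto simp: first_letter_perms_def)
  qed
  moreover have "{i. i = 0 \<and> (0::nat) < i} = {}" by auto
  ultimately show ?thesis by (simp add: Bfirst_def desB_def del: Collect_empty_eq)
qed

lemma Bfirst_1_neg: "Bfirst 1 (- 1) = 0"
proof -
  have "first_letter_perms 1 (- 1) = {}" by (auto simp: first_letter_perms_def)
  then show ?thesis by (simp add: Bfirst_def)
qed

section \<open>Palindromicity\<close>

text \<open>\<open>reflect_at d p\<close> is \<open>t\<^sup>d p(1/t)\<close>, truncated to degree \<open>d\<close>.\<close>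

definition reflect_at :: "nat \<Rightarrow> 'a::comm_monoid_add poly \<Rightarrow> 'a poly" where
  "reflect_at d p = (\<Sum>i\<le>d. monom (coeff p (d - i)) i)"

lemma coeff_reflect_at: "coeff (reflect_at d p) i = (if i \<le> d then coeff p (d - i) else 0)"
  unfolding reflect_at_def coeff_sum coeff_monom by (simp add: sum.delta')

lemma degree_reflect_at: "degree (reflect_at d p) \<le> d"
  by (rule degree_le) (simp add: coeff_reflect_at)

lemma reflect_at_0 [simp]: "reflect_at d 0 = 0"
  by (rule poly_eqI) (simp add: coeff_reflect_at)

lemma reflect_at_add: "reflect_at d (p + q) = reflect_at d p + reflect_at d q"
  by (rule poly_eqI) (simp add: coeff_reflect_at)

lemma reflect_at_diff: "reflect_at d (p - q) = reflect_at d p - reflect_at d (q :: 'a::ab_group_add poly)"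
  by (rule poly_eqI) (simp add: coeff_reflect_at)

lemma reflect_at_smult: "reflect_at d (smult c p) = smult c (reflect_at d (p :: 'a::comm_semiring_0 poly))"
  by (rule poly_eqI) (simp add: coeff_reflect_at)

lemma reflect_at_sum: "reflect_at d (\<Sum>x\<in>A. f x) = (\<Sum>x\<in>A. reflect_at d (f x))"
  by (induction A rule: infinite_finite_induct) (simp_all add: reflect_at_add)

lemma pCons_0_eq_monom_mult: "pCons 0 p = monom 1 1 * (p :: 'a::comm_semiring_1 poly)"
  by (simp add: monom_Suc monom_0)

lemma reflect_at_monom_shift:
  "reflect_at (Suc d) (monom 1 1 * p) = reflect_at d (p :: 'a::comm_semiring_1 poly)"
  by (rule poly_eqI) (auto simp: coeff_reflect_at coeff_monom_mult Suc_diff_le)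

lemma reflect_at_Suc:
  assumes "degree p \<le> d"
  shows "reflect_at (Suc d) p = monom 1 1 * reflect_at d (p :: 'a::comm_semiring_1 poly)"
proof (rule poly_eqI)
  fix i
  show "coeff (reflect_at (Suc d) p) i = coeff (monom 1 1 * reflect_at d p) i"
    using assms by (cases i) (auto simp: coeff_reflect_at coeff_monom_mult coeff_eq_0)
qed

lemma reflect_at_Suc_monom_if:
  fixes p :: "'a::comm_semiring_1 poly"
  assumes "degree p \<le> d"
  shows "reflect_at (Suc d) (monom 1 (if b then 1 else 0) * p) = monom 1 (if b then 0 else 1) * reflect_at d p"
proof (cases b)
  case True
  then show ?thesis using reflect_at_monom_shift[of d p] by simp
next
  case False
  then show ?thesis using reflect_at_Suc[OF assms] by simp
qed

lemma sum_reflect_index: "(\<Sum>l=1..M. g (Suc M - l)) = (\<Sum>l=1..M. g l)"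
  using sum.atLeastAtMost_rev[of g 1 M] by simp

text \<open>The recursion mixes positive and negative first letters, so palindromicity is proved for
  both at once; the degree is \<open>N - 1\<close> for positive and \<open>N\<close> for negative first letters.\<close>

definition Bfirst_reflection :: "nat \<Rightarrow> bool" where
  "Bfirst_reflection N \<longleftrightarrow>
     (\<forall>j\<in>{1..N}. Bfirst N (int j) = reflect_at (N - 1) (Bfirst N (int (Suc N - j)))) \<and>
     (\<forall>k\<in>{1..N}. Bfirst N (- int k) = reflect_at N (Bfirst N (- int (Suc N - k))))"

lemma Bfirst_reflection_1: "Bfirst_reflection 1"
proof -
  have "reflect_at 0 (1 :: int poly) = 1" by (rule poly_eqI) (simp add: coeff_reflect_at coeff_1)
  then have "Bfirst 1 (int 1) = reflect_at 0 (Bfirst 1 (int 1))" "Bfirst 1 (- int 1) = reflect_at 1 (Bfirst 1 (- int 1))"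
    using Bfirst_1_1 Bfirst_1_neg by simp_all
  then show ?thesis unfolding Bfirst_reflection_def by simp
qed

lemma Bfirst_reflection_terms:
  assumes M: "M \<ge> 1" and IH: "Bfirst_reflection M" and l: "l \<in> {1..M}"
  shows "reflect_at M (monom 1 (if b then 1 else 0) * Bfirst M (int l))
      = monom 1 (if b then 0 else 1) * Bfirst M (int (Suc M - l))"
    and "reflect_at (Suc M) (monom 1 1 * Bfirst M (int l)) = monom 1 1 * Bfirst M (int (Suc M - l))"
    and "reflect_at (Suc M) (monom 1 (if b then 1 else 0) * Bfirst M (- int l))
      = monom 1 (if b then 0 else 1) * Bfirst M (- int (Suc M - l))"
    and "reflect_at M (Bfirst M (- int l)) = Bfirst M (- int (Suc M - l))"
proof -
  have l': "Suc M - l \<in> {1..M}" and ll: "Suc M - (Suc M - l) = l" using l by auto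
  from IH l' have refl_pos: "reflect_at (M - 1) (Bfirst M (int l)) = Bfirst M (int (Suc M - l))"
    and refl_neg: "reflect_at M (Bfirst M (- int l)) = Bfirst M (- int (Suc M - l))"
    unfolding Bfirst_reflection_def ll by auto
  from IH l have deg_pos: "degree (Bfirst M (int l)) \<le> M - 1"
    and deg_neg: "degree (Bfirst M (- int l)) \<le> M"
    unfolding Bfirst_reflection_def by (metis degree_reflect_at)+
  show pos: "reflect_at M (monom 1 (if b then 1 else 0) * Bfirst M (int l))
      = monom 1 (if b then 0 else 1) * Bfirst M (int (Suc M - l))" for b
    using reflect_at_Suc_monom_if[OF deg_pos, of b] refl_pos M by simp
  show "reflect_at (Suc M) (monom 1 1 * Bfirst M (int l)) = monom 1 1 * Bfirst M (int (Suc M - l))"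
    using reflect_at_monom_shift[of M "Bfirst M (int l)"] pos[of False] by simp
  show "reflect_at (Suc M) (monom 1 (if b then 1 else 0) * Bfirst M (- int l))
      = monom 1 (if b then 0 else 1) * Bfirst M (- int (Suc M - l))"
    using reflect_at_Suc_monom_if[OF deg_neg, of b] refl_neg by simp
  show "reflect_at M (Bfirst M (- int l)) = Bfirst M (- int (Suc M - l))" by (rule refl_neg)
qed

lemma Bfirst_reflection_Suc_pos:
  assumes M: "M \<ge> 1" and IH: "Bfirst_reflection M" and j: "j \<in> {1..Suc M}"
  shows "Bfirst (Suc M) (int j) = reflect_at M (Bfirst (Suc M) (int (Suc (Suc M) - j)))"
proof -
  let ?j' = "Suc (Suc M) - j"
  have j': "1 \<le> ?j'" "?j' \<le> Suc M" and j_bounds: "1 \<le> j" "j \<le> Suc M" using j by auto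
  have "reflect_at M (Bfirst (Suc M) (int ?j'))
      = (\<Sum>l=1..M. reflect_at M (monom 1 (if l < ?j' then 1 else 0) * Bfirst M (int l)))
        + (\<Sum>l=1..M. reflect_at M (Bfirst M (- int l)))"
    unfolding Bfirst_Suc_pos[OF M j'] reflect_at_add reflect_at_sum ..
  also have "\<dots> = (\<Sum>l=1..M. monom 1 (if l < ?j' then 0 else 1) * Bfirst M (int (Suc M - l)))
        + (\<Sum>l=1..M. Bfirst M (- int (Suc M - l)))"
    by (intro arg_cong2[where f = "(+)"] sum.cong refl Bfirst_reflection_terms(1,4)[OF M IH]) auto
  also have "\<dots> = (\<Sum>l=1..M. monom 1 (if Suc M - l < ?j' then 0 else 1) * Bfirst M (int l))
        + (\<Sum>l=1..M. Bfirst M (- int l))"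
    using sum_reflect_index[where M = M and g = "\<lambda>l. monom 1 (if Suc M - l < ?j' then 0 else 1) * Bfirst M (int l)"]
      sum_reflect_index[where M = M and g = "\<lambda>l. Bfirst M (- int l)"]
    by (simp add: Suc_diff_le)
  also have "\<dots> = Bfirst (Suc M) (int j)"
    unfolding Bfirst_Suc_pos[OF M j_bounds] using j
    by (intro arg_cong2[where f = "(+)"] sum.cong refl) auto
  finally show ?thesis by simp
qed

lemma Bfirst_reflection_Suc_neg:
  assumes M: "M \<ge> 1" and IH: "Bfirst_reflection M" and k: "k \<in> {1..Suc M}"
  shows "Bfirst (Suc M) (- int k) = reflect_at (Suc M) (Bfirst (Suc M) (- int (Suc (Suc M) - k)))"
proof -
  let ?k' = "Suc (Suc M) - k"
  have k': "1 \<le> ?k'" "?k' \<le> Suc M" and k_bounds: "1 \<le> k" "k \<le> Suc M" using k by auto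
  have "reflect_at (Suc M) (Bfirst (Suc M) (- int ?k'))
      = (\<Sum>l=1..M. reflect_at (Suc M) (monom 1 1 * Bfirst M (int l)))
        + (\<Sum>l=1..M. reflect_at (Suc M) (monom 1 (if ?k' \<le> l then 1 else 0) * Bfirst M (- int l)))"
    unfolding Bfirst_Suc_neg[OF M k'] reflect_at_add reflect_at_sum ..
  also have "\<dots> = (\<Sum>l=1..M. monom 1 1 * Bfirst M (int (Suc M - l)))
        + (\<Sum>l=1..M. monom 1 (if ?k' \<le> l then 0 else 1) * Bfirst M (- int (Suc M - l)))"
    by (intro arg_cong2[where f = "(+)"] sum.cong refl Bfirst_reflection_terms(2,3)[OF M IH]) auto
  also have "\<dots> = (\<Sum>l=1..M. monom 1 1 * Bfirst M (int l))
        + (\<Sum>l=1..M. monom 1 (if ?k' \<le> Suc M - l then 0 else 1) * Bfirst M (- int l))"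
    using sum_reflect_index[where M = M and g = "\<lambda>l. monom 1 1 * Bfirst M (int l)"]
      sum_reflect_index[where M = M and g = "\<lambda>l. monom 1 (if ?k' \<le> Suc M - l then 0 else 1) * Bfirst M (- int l)"]
    by (simp add: Suc_diff_le)
  also have "\<dots> = Bfirst (Suc M) (- int k)"
    unfolding Bfirst_Suc_neg[OF M k_bounds] using k
    by (intro arg_cong2[where f = "(+)"] sum.cong refl) auto
  finally show ?thesis by simp
qed

lemma Bfirst_reflection: "N \<ge> 1 \<Longrightarrow> Bfirst_reflection N"
proof (induction N rule: dec_induct[where i = 1])
  case (step M)
  then show ?case
    unfolding Bfirst_reflection_def[of "Suc M"]
    using Bfirst_reflection_Suc_pos Bfirst_reflection_Suc_neg by simp
qed (rule Bfirst_reflection_1)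

definition palindromic :: "nat \<Rightarrow> 'a::comm_monoid_add poly \<Rightarrow> bool" where
  "palindromic d p \<longleftrightarrow> reflect_at d p = p"

lemma palindromic_BBplus:
  assumes j: "1 \<le> j" "j \<le> N"
  shows "palindromic (N - 1) (BBplus N j)"
proof -
  have refl: "reflect_at (N - 1) (Bplus N i) = Bplus N (N - i + 1)" if "i \<in> {1..N}" for i
  proof -
    have i': "N - i + 1 \<in> {1..N}" and ii: "Suc N - (N - i + 1) = i" and N: "1 \<le> N"
      using that by auto
    have "\<forall>j\<in>{1..N}. Bfirst N (int j) = reflect_at (N - 1) (Bfirst N (int (Suc N - j)))"
      using Bfirst_reflection[OF N] by (simp add: Bfirst_reflection_def)
    from bspec[OF this i'] show ?thesis unfolding ii Bplus_eq_Bfirst ..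
  qed
  have j': "j \<in> {1..N}" "N - j + 1 \<in> {1..N}" "N - (N - j + 1) + 1 = j" using j by auto
  show ?thesis
  proof (cases "2 * j = N + 1")
    case True
    then have "N - j + 1 = j" by simp
    then show ?thesis using refl[OF j'(1)] True by (simp add: palindromic_def BBplus_def)
  next
    case False
    then show ?thesis using refl[OF j'(1)] refl[OF j'(2)] j'(3)
      by (simp add: palindromic_def BBplus_def reflect_at_add add.commute)
  qed
qed

section \<open>The series \<open>Bfirst N j / (1 - t)\<^sup>N\<^sup>-\<^sup>1\<close>\<close>

lemma geometric_tail_sum:
  fixes x y :: "'a::comm_ring_1"
  assumes "1 \<le> j" "j \<le> Suc M"
  shows "(x - y) * (\<Sum>l=j..M. x^(M-l) * y^(l-1)) = y^(j-1) * x^(Suc M - j) - y^M"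
  using assms
proof (induction M)
  case (Suc M)
  show ?case
  proof (cases "j = Suc (Suc M)")
    case False
    then have j: "j \<le> Suc M" using Suc.prems by auto
    have "(\<Sum>l=j..M. x^(Suc M-l) * y^(l-1)) = x * (\<Sum>l=j..M. x^(M-l) * y^(l-1))"
      unfolding sum_distrib_left by (rule sum.cong) (auto simp: Suc_diff_le)
    then have "(\<Sum>l=j..Suc M. x^(Suc M-l) * y^(l-1)) = x * (\<Sum>l=j..M. x^(M-l) * y^(l-1)) + y^M"
      using j by (simp add: sum.cl_ivl_Suc)
    then have "(x - y) * (\<Sum>l=j..Suc M. x^(Suc M-l) * y^(l-1))
        = x * ((x - y) * (\<Sum>l=j..M. x^(M-l) * y^(l-1))) + (x - y) * y^M"
      by (simp add: algebra_simps)
    also have "\<dots> = x * (y^(j-1) * x^(Suc M - j) - y^M) + (x - y) * y^M"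
      using Suc.IH Suc.prems j by simp
    also have "\<dots> = y^(j-1) * (x * x^(Suc M - j)) - y^(Suc M)"
      by (simp add: algebra_simps)
    also have "x * x^(Suc M - j) = x^(Suc (Suc M) - j)" using j by (simp add: Suc_diff_le)
    finally show ?thesis .
  qed simp
qed simp

lemma geometric_head_sum:
  fixes x y :: "'a::comm_ring_1"
  assumes "1 \<le> k" "k \<le> Suc M"
  shows "(x - y) * (\<Sum>l\<in>{1..<k}. x^(M-l) * y^(l-1)) = x^M - x^(Suc M - k) * y^(k-1)"
proof -
  have split: "{1..M} = {1..<k} \<union> {k..M}" using assms by auto
  have "(\<Sum>l=1..M. x^(M-l) * y^(l-1)) = (\<Sum>l\<in>{1..<k}. x^(M-l) * y^(l-1)) + (\<Sum>l=k..M. x^(M-l) * y^(l-1))"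
    unfolding split by (rule sum.union_disjoint) auto
  then have "(x - y) * (\<Sum>l\<in>{1..<k}. x^(M-l) * y^(l-1))
      = (x - y) * (\<Sum>l=1..M. x^(M-l) * y^(l-1)) - (x - y) * (\<Sum>l=k..M. x^(M-l) * y^(l-1))"
    by (simp add: algebra_simps)
  then show ?thesis
    using geometric_tail_sum[of 1 M x y] geometric_tail_sum[OF assms, of x y] by (simp add: mult.commute)
qed

lemma sum_lessThan_minus_if:
  fixes q :: nat
  shows "(\<Sum>r<q+1-(if b then 1 else 0). f r) = (\<Sum>r<q. f r) + (if b then 0 else f q)"
  by (cases b) auto

lemma sum_shifted_partial_sums:
  fixes M q :: nat
  shows "(\<Sum>l=1..M. \<Sum>r<q+1-(if P l then 1 else 0). f l r)
    = (\<Sum>r<q. \<Sum>l=1..M. f l r) + (\<Sum>l\<in>{l\<in>{1..M}. \<not> P l}. f l q)"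
proof -
  have "(\<Sum>l\<in>{l\<in>{1..M}. \<not> P l}. f l q) = (\<Sum>l=1..M. if \<not> P l then f l q else 0)"
    by (rule sum.inter_filter) simp
  also have "\<dots> = (\<Sum>l=1..M. if P l then 0 else f l q)"
    by (rule sum.cong) simp_all
  finally show ?thesis
    unfolding sum_lessThan_minus_if sum.distrib sum.swap[where A = "{1..M}" and B = "{..<q}"] by simp
qed

lemma sum_partial_sums_Suc:
  fixes M q :: nat
  shows "(\<Sum>l=1..M. \<Sum>r<q+1. f l r) = (\<Sum>r<q. \<Sum>l=1..M. f l r) + (\<Sum>l=1..M. f l q)"
  using sum_shifted_partial_sums[where P = "\<lambda>_. False" and f = f and M = M and q = q]
  by (simp only: if_False diff_zero simp_thms Collect_mem_eq)

text \<open>The coefficients of \<open>Bfirst N j / (1 - t)\<^sup>N\<^sup>-\<^sup>1\<close> for a first letter \<open>j > 0\<close> resp. \<open>-k < 0\<close>;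
  for \<open>q \<ge> 1\<close> both are differences of \<open>x\<^sup>a (x + 1)\<^sup>b\<close> at consecutive integers.\<close>

definition closed_pos :: "nat \<Rightarrow> nat \<Rightarrow> nat \<Rightarrow> int" where
  "closed_pos N j q = (if q = 0 then (if j = 1 then 1 else 0) else
     (2 * int q + 1)^(N-j) * (2 * int q)^(j-1) - (2 * int q)^(N-j) * (2 * int q - 1)^(j-1))"

definition closed_neg :: "nat \<Rightarrow> nat \<Rightarrow> nat \<Rightarrow> int" where
  "closed_neg N k q = (if q = 0 then 0 else
     (2 * int q - 1)^(N-k) * (2 * int q)^(k-1) - (2 * int q - 2)^(N-k) * (2 * int q - 1)^(k-1))"

definition pow_step :: "nat \<Rightarrow> int \<Rightarrow> int" where
  "pow_step M x = x^M - (x - 1)^M"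

lemma sum_closed_pos_from:
  assumes "q \<ge> 1" "1 \<le> j" "j \<le> Suc M"
  shows "(\<Sum>l=j..M. closed_pos M l q) = (2*int q)^(j-1) * (2*int q+1)^(Suc M - j) - (2*int q)^M
      - ((2*int q - 1)^(j-1) * (2*int q)^(Suc M - j) - (2*int q - 1)^M)"
proof -
  let ?A = "2*int q+1" and ?B = "2*int q" and ?C = "2*int q - 1"
  have "(\<Sum>l=j..M. closed_pos M l q) = (\<Sum>l=j..M. ?A^(M-l) * ?B^(l-1)) - (\<Sum>l=j..M. ?B^(M-l) * ?C^(l-1))"
    unfolding sum_subtractf[symmetric] by (rule sum.cong) (use assms in \<open>auto simp: closed_pos_def\<close>)
  then show ?thesis
    using geometric_tail_sum[OF assms(2,3), of ?A ?B] geometric_tail_sum[OF assms(2,3), of ?B ?C] by simp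
qed

lemma sum_closed_neg_below:
  assumes "q \<ge> 1" "1 \<le> k" "k \<le> Suc M"
  shows "(\<Sum>l\<in>{1..<k}. closed_neg M l q) = ((2*int q - 1)^(Suc M - k) * (2*int q)^(k-1) - (2*int q - 1)^M)
      - ((2*int q - 2)^(Suc M - k) * (2*int q - 1)^(k-1) - (2*int q - 2)^M)"
proof -
  let ?B = "2*int q" and ?C = "2*int q - 1" and ?E = "2*int q - 2"
  have "(\<Sum>l\<in>{1..<k}. closed_neg M l q) = (\<Sum>l\<in>{1..<k}. ?C^(M-l) * ?B^(l-1)) - (\<Sum>l\<in>{1..<k}. ?E^(M-l) * ?C^(l-1))"
    unfolding sum_subtractf[symmetric] by (rule sum.cong) (use assms in \<open>auto simp: closed_neg_def\<close>)
  then show ?thesis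
    using geometric_head_sum[OF assms(2,3), of ?C ?B] geometric_head_sum[OF assms(2,3), of ?E ?C] by simp
qed

lemma sum_closed_pos:
  assumes "q \<ge> 1" "M \<ge> 1"
  shows "(\<Sum>l=1..M. closed_pos M l q) = pow_step M (2*int q+1) - pow_step M (2*int q)"
  using sum_closed_pos_from[OF assms(1), of 1 M] by (simp add: pow_step_def)

lemma sum_closed_pos_0: "M \<ge> 1 \<Longrightarrow> (\<Sum>l=1..M. closed_pos M l 0) = 1"
  by (simp add: closed_pos_def sum.delta)

lemma sum_closed_neg:
  assumes "q \<ge> 1"
  shows "(\<Sum>l=1..M. closed_neg M l q) = pow_step M (2*int q) - pow_step M (2*int q - 1)"
proof -
  have "{1..M} = {1..<Suc M}" by auto
  then show ?thesis using sum_closed_neg_below[OF assms, of "Suc M" M] by (simp add: pow_step_def algebra_simps)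
qed

text \<open>Summed over all first letters, the closed forms telescope.\<close>

lemma sum_closed_before:
  assumes "M \<ge> 1"
  shows "(\<Sum>r<q. \<Sum>l=1..M. closed_pos M l r) + (\<Sum>r<q. \<Sum>l=1..M. closed_neg M l r)
    = (if q = 0 then 0 else pow_step M (2*int q - 1))"
proof (induction q)
  case (Suc q)
  show ?case
  proof (cases "q = 0")
    case True
    then show ?thesis using sum_closed_pos_0[OF assms] assms by (simp add: pow_step_def closed_neg_def)
  next
    case False
    then show ?thesis
      using Suc.IH sum_closed_pos[of q M] sum_closed_neg[of q M] assms by (simp add: algebra_simps)
  qed
qed simp

lemma closed_pos_Suc:
  assumes M: "M \<ge> 1" and j: "1 \<le> j" "j \<le> Suc M"
  shows "closed_pos (Suc M) j q = (\<Sum>l=1..M. \<Sum>r<q+1-(if l<j then 1 else 0). closed_pos M l r)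
    + (\<Sum>l=1..M. \<Sum>r<q+1. closed_neg M l r)"
proof -
  have "{l \<in> {1..M}. \<not> l < j} = {j..M}" using j by auto
  then have "(\<Sum>l=1..M. \<Sum>r<q+1-(if l<j then 1 else 0). closed_pos M l r) + (\<Sum>l=1..M. \<Sum>r<q+1. closed_neg M l r)
     = ((\<Sum>r<q. \<Sum>l=1..M. closed_pos M l r) + (\<Sum>r<q. \<Sum>l=1..M. closed_neg M l r))
       + (\<Sum>l=j..M. closed_pos M l q) + (\<Sum>l=1..M. closed_neg M l q)"
    unfolding sum_shifted_partial_sums sum_partial_sums_Suc by simp
  also have "\<dots> = closed_pos (Suc M) j q"
  proof (cases "q = 0")
    case True
    have "(\<Sum>l=j..M. closed_pos M l 0) = (if j = 1 then 1 else 0)"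
      using j sum_closed_pos_0[OF M] by (auto simp: closed_pos_def intro: sum.neutral)
    then show ?thesis using True by (simp add: closed_pos_def closed_neg_def)
  next
    case False
    then show ?thesis unfolding sum_closed_before[OF M] using sum_closed_pos_from[of q j M] sum_closed_neg[of q M] j
      by (simp add: closed_pos_def pow_step_def algebra_simps)
  qed
  finally show ?thesis by simp
qed

lemma closed_neg_Suc:
  assumes M: "M \<ge> 1" and k: "1 \<le> k" "k \<le> Suc M"
  shows "closed_neg (Suc M) k q = (\<Sum>l=1..M. \<Sum>r<q. closed_pos M l r)
    + (\<Sum>l=1..M. \<Sum>r<q+1-(if k \<le> l then 1 else 0). closed_neg M l r)"
proof -
  have "{l \<in> {1..M}. \<not> k \<le> l} = {1..<k}" using k by auto
  then have "(\<Sum>l=1..M. \<Sum>r<q. closed_pos M l r) + (\<Sum>l=1..M. \<Sum>r<q+1-(if k \<le> l then 1 else 0). closed_neg M l r)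
     = ((\<Sum>r<q. \<Sum>l=1..M. closed_pos M l r) + (\<Sum>r<q. \<Sum>l=1..M. closed_neg M l r)) + (\<Sum>l\<in>{1..<k}. closed_neg M l q)"
    unfolding sum_shifted_partial_sums sum.swap[where A = "{1..M}" and B = "{..<q}"] by simp
  also have "\<dots> = closed_neg (Suc M) k q"
    unfolding sum_closed_before[OF M] using sum_closed_neg_below[of q k M] k
    by (cases "q = 0") (simp_all add: closed_neg_def pow_step_def algebra_simps)
  finally show ?thesis by simp
qed

definition fps_geom :: "int fps" where "fps_geom = Abs_fps (\<lambda>_. 1)"

lemma one_minus_X_mult_geom: "(1 - fps_X) * fps_geom = 1"
proof (rule fps_ext)
  fix n
  show "((1 - fps_X) * fps_geom) $ n = (1 :: int fps) $ n"
    by (cases n) (auto simp: fps_geom_def algebra_simps fps_mult_nth)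
qed

lemma fps_mult_geom_nth: "(F * fps_geom) $ q = (\<Sum>r<Suc q. F $ r)"
  by (simp add: fps_mult_nth fps_geom_def atLeast0AtMost lessThan_Suc_atMost)

lemma fps_X_power_mult_geom_nth: "(fps_X ^ d * (F * fps_geom)) $ q = (\<Sum>r<q+1-d. F $ r)"
proof (cases "q < d")
  case False
  then have "Suc (q - d) = q + 1 - d" by simp
  then show ?thesis using False by (simp add: fps_X_power_mult_nth fps_mult_geom_nth)
qed (simp add: fps_X_power_mult_nth)

definition Bfirst_series :: "nat \<Rightarrow> int \<Rightarrow> int fps" where
  "Bfirst_series N j = fps_of_poly (Bfirst N j) * fps_geom ^ (N - 1)"

lemma fps_X_mult_geom_nth: "(fps_X * (F * fps_geom)) $ q = (\<Sum>r<q. F $ r)"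
  using fps_X_power_mult_geom_nth[of 1 F q] by simp

lemma Bfirst_series_Suc_pos_nth:
  assumes M: "M \<ge> 1" and j: "1 \<le> j" "j \<le> Suc M"
  shows "Bfirst_series (Suc M) (int j) $ q =
    (\<Sum>l=1..M. \<Sum>r<q+1-(if l<j then 1 else 0). Bfirst_series M (int l) $ r)
     + (\<Sum>l=1..M. \<Sum>r<q+1. Bfirst_series M (- int l) $ r)"
proof -
  have geom: "fps_geom ^ (Suc M - 1) = fps_geom ^ (M - 1) * fps_geom"
    using M by (cases M) (auto simp: mult.commute)
  have poly: "fps_of_poly (Bfirst (Suc M) (int j)) =
      (\<Sum>l=1..M. fps_X ^ (if l<j then 1 else 0) * fps_of_poly (Bfirst M (int l)))
     + (\<Sum>l=1..M. fps_X ^ 0 * fps_of_poly (Bfirst M (- int l)))"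
    unfolding Bfirst_Suc_pos[OF M j]
    by (simp add: fps_of_poly_add fps_of_poly_sum fps_of_poly_mult fps_of_poly_monom')
  have "Bfirst_series (Suc M) (int j) =
      (\<Sum>l=1..M. fps_X ^ (if l<j then 1 else 0) * (Bfirst_series M (int l) * fps_geom))
     + (\<Sum>l=1..M. fps_X ^ 0 * (Bfirst_series M (- int l) * fps_geom))"
    unfolding Bfirst_series_def geom poly distrib_right sum_distrib_right by (simp add: mult_ac)
  then show ?thesis by (simp add: fps_sum_nth fps_X_power_mult_geom_nth del: power_0)
qed

lemma Bfirst_series_Suc_neg_nth:
  assumes M: "M \<ge> 1" and k: "1 \<le> k" "k \<le> Suc M"
  shows "Bfirst_series (Suc M) (- int k) $ q = (\<Sum>l=1..M. \<Sum>r<q. Bfirst_series M (int l) $ r)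
     + (\<Sum>l=1..M. \<Sum>r<q+1-(if k \<le> l then 1 else 0). Bfirst_series M (- int l) $ r)"
proof -
  have geom: "fps_geom ^ (Suc M - 1) = fps_geom ^ (M - 1) * fps_geom"
    using M by (cases M) (auto simp: mult.commute)
  have poly: "fps_of_poly (Bfirst (Suc M) (- int k)) = (\<Sum>l=1..M. fps_X * fps_of_poly (Bfirst M (int l)))
     + (\<Sum>l=1..M. fps_X ^ (if k \<le> l then 1 else 0) * fps_of_poly (Bfirst M (- int l)))"
    unfolding Bfirst_Suc_neg[OF M k]
    by (simp add: fps_of_poly_add fps_of_poly_sum fps_of_poly_mult fps_of_poly_monom')
  have "Bfirst_series (Suc M) (- int k) = (\<Sum>l=1..M. fps_X * (Bfirst_series M (int l) * fps_geom))
     + (\<Sum>l=1..M. fps_X ^ (if k \<le> l then 1 else 0) * (Bfirst_series M (- int l) * fps_geom))"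
    unfolding Bfirst_series_def geom poly distrib_right sum_distrib_right by (simp add: mult_ac)
  then show ?thesis
    by (simp add: fps_sum_nth fps_X_power_mult_geom_nth fps_X_mult_geom_nth del: fps_X_mult_nth)
qed

lemma Bfirst_series_nth:
  assumes "N \<ge> 1"
  shows "(\<forall>j\<in>{1..N}. \<forall>q. Bfirst_series N (int j) $ q = closed_pos N j q) \<and>
    (\<forall>k\<in>{1..N}. \<forall>q. Bfirst_series N (- int k) $ q = closed_neg N k q)"
  using assms
proof (induction N rule: dec_induct)
  case base
  have "Bfirst_series 1 1 = 1" "Bfirst_series 1 (- 1) = 0"
    using Bfirst_1_1 Bfirst_1_neg by (simp_all add: Bfirst_series_def)
  then show ?case by (auto simp: closed_pos_def closed_neg_def)
next
  case (step M)
  then have M: "M \<ge> 1" by simp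
  show ?case
  proof (intro conjI ballI allI)
    fix j q assume "j \<in> {1..Suc M}"
    then have j: "1 \<le> j" "j \<le> Suc M" by auto
    show "Bfirst_series (Suc M) (int j) $ q = closed_pos (Suc M) j q"
      unfolding Bfirst_series_Suc_pos_nth[OF M j] closed_pos_Suc[OF M j] using step.IH by simp
  next
    fix k q assume "k \<in> {1..Suc M}"
    then have k: "1 \<le> k" "k \<le> Suc M" by auto
    show "Bfirst_series (Suc M) (- int k) $ q = closed_neg (Suc M) k q"
      unfolding Bfirst_series_Suc_neg_nth[OF M k] closed_neg_Suc[OF M k] using step.IH by simp
  qed
qed

section \<open>Chains of the interval poset\<close>

definition strictly_below :: "'b set \<Rightarrow> ('b \<Rightarrow> 'b \<Rightarrow> bool) \<Rightarrow> 'b \<Rightarrow> 'b set" where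
  "strictly_below P le x = {y \<in> P. le y x \<and> y \<noteq> x}"

locale partial_order_rel =
  fixes le :: "'b \<Rightarrow> 'b \<Rightarrow> bool"
  assumes refl: "le x x"
    and antisym: "le x y \<Longrightarrow> le y x \<Longrightarrow> x = y"
    and trans: "le x y \<Longrightarrow> le y z \<Longrightarrow> le x z"
begin

lemma chain_has_max:
  assumes "finite C" "C \<noteq> {}" "\<forall>x\<in>C. \<forall>y\<in>C. le x y \<or> le y x"
  shows "\<exists>m\<in>C. \<forall>y\<in>C. le y m"
  using assms
proof (induction C rule: finite_ne_induct)
  case (insert a F)
  then obtain m where m: "m \<in> F" "\<forall>y\<in>F. le y m" by auto
  then show ?case using insert.prems trans[of _ m a] by (metis insert_iff)
qed (auto simp: refl)

lemma strictly_below_strictly_below: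
  assumes "y \<in> strictly_below P le x"
  shows "strictly_below (strictly_below P le x) le y = strictly_below P le y"
  using assms unfolding strictly_below_def by (auto dest: trans antisym)

lemma chains_with_top:
  assumes "x \<in> P"
  shows "{C \<in> order_complex P le. x \<in> C \<and> (\<forall>y\<in>C. le y x)}
    = insert x ` order_complex (strictly_below P le x) le"
proof (intro equalityI subsetI)
  fix C assume C: "C \<in> {C \<in> order_complex P le. x \<in> C \<and> (\<forall>y\<in>C. le y x)}"
  then have "C - {x} \<in> order_complex (strictly_below P le x) le" and "C = insert x (C - {x})"
    by (auto simp: order_complex_def strictly_below_def)
  then show "C \<in> insert x ` order_complex (strictly_below P le x) le" by blast
qed (use assms refl in \<open>auto simp: order_complex_def strictly_below_def\<close>)

text \<open>Classifying the nonempty chains by their top element.\<close>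

lemma order_complex_sum_power:
  fixes Y :: "'r::comm_semiring_1"
  assumes fin: "finite P"
  shows "(\<Sum>C\<in>order_complex P le. Y ^ card C)
    = 1 + (\<Sum>x\<in>P. Y * (\<Sum>C\<in>order_complex (strictly_below P le x) le. Y ^ card C))"
proof -
  let ?OC = "order_complex P le"
  let ?top = "\<lambda>x C. x \<in> C \<and> (\<forall>y\<in>C. le y x)"
  have fin_OC: "finite ?OC"
    by (rule finite_subset[of _ "Pow P"]) (use fin in \<open>auto simp: order_complex_def\<close>)
  have one_top: "(\<Sum>x\<in>P. if ?top x C then Y ^ card C else 0) = Y ^ card C" if C: "C \<in> ?OC - {{}}" for C
  proof -
    obtain m where m: "m \<in> C" "\<forall>y\<in>C. le y m"
      using chain_has_max[of C] C by (auto simp: order_complex_def)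
    then have "{x \<in> P. ?top x C} = {m}" using C antisym by (auto simp: order_complex_def)
    then show ?thesis using fin by (simp add: sum.inter_filter[symmetric])
  qed
  have top_sum: "(\<Sum>C\<in>?OC - {{}}. if ?top x C then Y ^ card C else 0)
      = Y * (\<Sum>C\<in>order_complex (strictly_below P le x) le. Y ^ card C)" if x: "x \<in> P" for x
  proof -
    have "{C \<in> ?OC - {{}}. ?top x C} = {C \<in> ?OC. ?top x C}" by auto
    then have "{C \<in> ?OC - {{}}. ?top x C} = insert x ` order_complex (strictly_below P le x) le"
      using chains_with_top[OF x] by simp
    moreover have "inj_on (insert x) (order_complex (strictly_below P le x) le)"
      unfolding inj_on_def order_complex_def strictly_below_def by blast
    moreover have "Y ^ card (insert x C) = Y * Y ^ card C"
      if "C \<in> order_complex (strictly_below P le x) le" for C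
    proof -
      have "finite C" "x \<notin> C" using that by (auto simp: order_complex_def strictly_below_def)
      then show ?thesis by simp
    qed
    ultimately show ?thesis
      using fin_OC by (simp add: sum.inter_filter[symmetric] sum.reindex sum_distrib_left)
  qed
  have "(\<Sum>C\<in>?OC. Y ^ card C) = 1 + (\<Sum>C\<in>?OC - {{}}. Y ^ card C)"
    using fin_OC by (simp add: sum.remove[of _ "{}"] order_complex_def)
  also have "(\<Sum>C\<in>?OC - {{}}. Y ^ card C) = (\<Sum>C\<in>?OC - {{}}. \<Sum>x\<in>P. if ?top x C then Y ^ card C else 0)"
    using one_top by simp
  also have "\<dots> = (\<Sum>x\<in>P. \<Sum>C\<in>?OC - {{}}. if ?top x C then Y ^ card C else 0)"
    by (rule sum.swap)
  finally show ?thesis using top_sum by simp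
qed

lemma chain_strict_mono_inj:
  fixes f :: "'b \<Rightarrow> 'c::linorder"
  assumes "\<forall>x\<in>C. \<forall>y\<in>C. le x y \<or> le y x"
    and "\<And>x y. x \<in> C \<Longrightarrow> y \<in> C \<Longrightarrow> le x y \<Longrightarrow> x \<noteq> y \<Longrightarrow> f x < f y"
  shows "inj_on f C"
  by (rule inj_onI) (metis assms less_irrefl)

end

interpretation int_le: partial_order_rel int_le
  by unfold_locales (auto simp: int_le_def)

lemma simplicial_complex_finite_face: "simplicial_complex K \<Longrightarrow> B \<in> K \<Longrightarrow> finite B"
  by (auto simp: simplicial_complex_def)

lemma simplicial_complex_subface: "simplicial_complex K \<Longrightarrow> B \<in> K \<Longrightarrow> B' \<subseteq> B \<Longrightarrow> B' \<in> K"
  by (auto simp: simplicial_complex_def)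

lemma card_face_le_Max:
  assumes "simplicial_complex K" "Max (card ` K) = n" and "B \<in> K"
  shows "card B \<le> n"
  using assms Max_ge[of "card ` K" "card B"] by (auto simp: simplicial_complex_def)

lemma card_Int_complex_face_le:
  assumes K: "simplicial_complex K" "Max (card ` K) = n" and C: "C \<in> Int_complex K"
  shows "card C \<le> n"
proof -
  have CP: "C \<subseteq> int_poset K" and chain: "\<forall>x\<in>C. \<forall>y\<in>C. int_le x y \<or> int_le y x"
    using C by (auto simp: Int_complex_def order_complex_def)
  let ?f = "\<lambda>(A::'a set, B::'a set). card B - card A"
  have bounds: "finite A" "finite B" "1 \<le> card A" "card A \<le> card B" "card B \<le> n"
    if "(A, B) \<in> int_poset K" for A B
  proof -
    have AB: "A \<noteq> {}" "A \<subseteq> B" "B \<in> K" using that by (auto simp: int_poset_def)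
    then show "finite B" "finite A" using simplicial_complex_finite_face[OF K(1)] finite_subset by blast+
    then show "1 \<le> card A" "card A \<le> card B" "card B \<le> n"
      using AB card_face_le_Max[OF K] by (auto simp: Suc_le_eq card_gt_0_iff intro: card_mono)
  qed
  have "inj_on ?f C"
  proof (rule int_le.chain_strict_mono_inj[OF chain])
    fix x y assume "x \<in> C" "y \<in> C" "int_le x y" "x \<noteq> y"
    moreover obtain A B A' B' where xy: "x = (A, B)" "y = (A', B')" by (cases x, cases y)
    ultimately have sub: "A' \<subseteq> A" "B \<subseteq> B'" "A' \<subset> A \<or> B \<subset> B'"
      and fin: "finite A" "finite B'" and "card A \<le> card B" "card A' \<le> card B'"
      using CP bounds by (auto simp: int_le_def)
    moreover have "card A' < card A \<or> card B < card B'"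
      using sub(3) fin by (auto intro: psubset_card_mono)
    moreover have "card A' \<le> card A" "card B \<le> card B'"
      using card_mono[OF fin(1) sub(1)] card_mono[OF fin(2) sub(2)] .
    ultimately show "?f x < ?f y" using xy by auto
  qed
  moreover have "?f ` C \<subseteq> {..<n}"
  proof
    fix z assume "z \<in> ?f ` C"
    then obtain A B where "(A, B) \<in> C" "z = card B - card A" by auto
    then show "z \<in> {..<n}" using bounds[of A B] CP by auto
  qed
  ultimately show ?thesis using card_inj_on_le[of ?f C "{..<n}"] by simp
qed

lemma sum_Pow_power_card_diff:
  fixes c :: "'r :: comm_semiring_1"
  assumes "finite V"
  shows "(\<Sum>U\<in>Pow V. c ^ card (V - U)) = (1 + c) ^ card V"
  using prod_add[OF assms, of "\<lambda>_. 1" "\<lambda>_. c"] by simp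

lemma sum_nested_pairs_power:
  fixes c :: "'r :: comm_semiring_1"
  assumes "finite S"
  shows "(\<Sum>(U,V)\<in>{(U,V). U \<subseteq> V \<and> V \<subseteq> S}. c ^ card (V - U)) = (2 + c) ^ card S"
proof -
  have fin: "finite (Pow V)" if "V \<in> Pow S" for V using assms that finite_subset by auto
  have "{(U,V). U \<subseteq> V \<and> V \<subseteq> S} = (\<lambda>(V,U). (U,V)) ` Sigma (Pow S) (\<lambda>V. Pow V)" by auto
  then have "(\<Sum>(U,V)\<in>{(U,V). U \<subseteq> V \<and> V \<subseteq> S}. c ^ card (V - U)) = (\<Sum>(V,U)\<in>Sigma (Pow S) (\<lambda>V. Pow V). c ^ card (V - U))"
    by (simp add: sum.reindex inj_on_def case_prod_beta)
  also have "\<dots> = (\<Sum>V\<in>Pow S. \<Sum>U\<in>Pow V. c ^ card (V - U))"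
    by (rule sum.Sigma[symmetric]) (use assms fin in auto)
  also have "\<dots> = (\<Sum>V\<in>Pow S. (1 + c) ^ card V)"
    by (rule sum.cong) (use assms finite_subset in \<open>auto intro!: sum_Pow_power_card_diff\<close>)
  also have "\<dots> = (\<Sum>V\<in>Pow S. (1 + c) ^ card V * 1 ^ card (S - V))" by simp
  also have "\<dots> = (1 + c + 1) ^ card S" using prod_add[OF assms, of "\<lambda>_. 1 + c" "\<lambda>_. 1"] by simp
  also have "(1 + c + 1) = (2 + c)" by (metis add.commute add.left_commute one_add_one)
  finally show ?thesis .
qed

definition subintervals :: "'a set \<Rightarrow> 'a set \<Rightarrow> ('a set \<times> 'a set) set" where
  "subintervals A B = {(A', B'). A \<subseteq> A' \<and> A' \<subseteq> B' \<and> B' \<subseteq> B}"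

lemma sum_subintervals_power:
  fixes c :: "'r :: comm_semiring_1"
  assumes "finite B" "A \<subseteq> B"
  shows "(\<Sum>(A',B')\<in>subintervals A B. c ^ card (B' - A')) = (2 + c) ^ card (B - A)"
proof -
  let ?S = "B - A"
  let ?f = "\<lambda>(U,V). (A \<union> U, A \<union> V)"
  have img: "subintervals A B = ?f ` {(U,V). U \<subseteq> V \<and> V \<subseteq> ?S}"
  proof (rule set_eqI, rule iffI)
    fix p assume "p \<in> subintervals A B"
    then obtain A' B' where p: "p = (A', B')" "A \<subseteq> A'" "A' \<subseteq> B'" "B' \<subseteq> B" by (auto simp: subintervals_def)
    then have "(A' - A, B' - A) \<in> {(U,V). U \<subseteq> V \<and> V \<subseteq> ?S}" "p = ?f (A' - A, B' - A)" by auto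
    then show "p \<in> ?f ` {(U,V). U \<subseteq> V \<and> V \<subseteq> ?S}" by blast
  next
    fix p assume "p \<in> ?f ` {(U,V). U \<subseteq> V \<and> V \<subseteq> ?S}"
    then show "p \<in> subintervals A B" using assms by (auto simp: subintervals_def)
  qed
  have inj: "inj_on ?f {(U,V). U \<subseteq> V \<and> V \<subseteq> ?S}"
    by (rule inj_onI) (auto simp: set_eq_iff)
  have "(\<Sum>(A',B')\<in>subintervals A B. c ^ card (B' - A')) = (\<Sum>(U,V)\<in>{(U,V). U \<subseteq> V \<and> V \<subseteq> ?S}. c ^ card ((A \<union> V) - (A \<union> U)))"
    unfolding img by (subst sum.reindex[OF inj]) (simp add: case_prod_beta)
  also have "\<dots> = (\<Sum>(U,V)\<in>{(U,V). U \<subseteq> V \<and> V \<subseteq> ?S}. c ^ card (V - U))"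
  proof (rule sum.cong)
    fix p assume "p \<in> {(U,V). U \<subseteq> V \<and> V \<subseteq> ?S}"
    then obtain U V where "p = (U,V)" "U \<subseteq> V" "V \<subseteq> ?S" by auto
    moreover then have "(A \<union> V) - (A \<union> U) = V - U" by auto
    ultimately show "(case p of (U, V) \<Rightarrow> c ^ card (A \<union> V - (A \<union> U))) = (case p of (U, V) \<Rightarrow> c ^ card (V - U))" by simp
  qed simp
  also have "\<dots> = (2 + c) ^ card ?S" using sum_nested_pairs_power[of ?S c] assms by simp
  finally show ?thesis .
qed

lemma finite_subintervals: "finite B \<Longrightarrow> finite (subintervals A B)"
  by (rule finite_subset[of _ "Pow B \<times> Pow B"]) (auto simp: subintervals_def)

lemma strictly_below_int_poset:
  assumes K: "simplicial_complex K" and x: "(A, B) \<in> int_poset K"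
  shows "strictly_below (int_poset K) int_le (A, B) = subintervals A B - {(A, B)}"
  using x simplicial_complex_subface[OF K]
  unfolding strictly_below_def subintervals_def int_poset_def int_le_def by auto

lemma card_diff_proper_subinterval:
  assumes "(A', B') \<in> subintervals A B - {(A, B)}" "finite B"
  shows "card (B' - A') < card (B - A)"
proof -
  have "B' - A' \<subset> B - A" using assms(1) by (auto simp: subintervals_def)
  then show ?thesis using assms(2) by (simp add: psubset_card_mono)
qed

text \<open>\<open>fps_X_geom\<close> is \<open>Y = t/(1 - t)\<close>; by \<open>h_poly_series\<close> below, \<open>\<Sum>\<^sub>F Y\<^sup>|\<^sup>F\<^sup>|\<close> is an
  \<open>h\<close>-polynomial divided by \<open>(1 - t)\<^sup>n\<close>.\<close>

definition fps_X_geom :: "int fps" where "fps_X_geom = fps_X * fps_geom"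

definition odd_power_series :: "nat \<Rightarrow> int fps" where
  "odd_power_series s = Abs_fps (\<lambda>q. (2 * int q + 1) ^ s)"

lemma fps_X_geom_mult_one_minus_X: "fps_X_geom * (1 - fps_X) = fps_X"
  using one_minus_X_mult_geom by (simp add: fps_X_geom_def mult_ac)

lemma fps_X_mult_shifted_odd_power_series:
  "fps_X * Abs_fps (\<lambda>q. (2 * int q + 3) ^ s) = odd_power_series s - 1"
proof (rule fps_ext)
  fix n
  show "(fps_X * Abs_fps (\<lambda>q. (2 * int q + 3) ^ s)) $ n = (odd_power_series s - 1) $ n"
    by (cases n) (auto simp: odd_power_series_def algebra_simps)
qed

lemma sum_subintervals_odd_power_series:
  assumes "finite B" "A \<subseteq> B"
  shows "(\<Sum>(A', B')\<in>subintervals A B. odd_power_series (card (B' - A')))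
    = Abs_fps (\<lambda>q. (2 * int q + 3) ^ card (B - A))"
proof (rule fps_ext)
  fix q
  have "(\<Sum>(A', B')\<in>subintervals A B. odd_power_series (card (B' - A'))) $ q
      = (\<Sum>(A', B')\<in>subintervals A B. (2 * int q + 1) ^ card (B' - A'))"
    by (simp add: fps_sum_nth odd_power_series_def case_prod_beta)
  also have "\<dots> = (2 + (2 * int q + 1)) ^ card (B - A)" by (rule sum_subintervals_power[OF assms])
  finally show "(\<Sum>(A', B')\<in>subintervals A B. odd_power_series (card (B' - A'))) $ q
      = Abs_fps (\<lambda>q. (2 * int q + 3) ^ card (B - A)) $ q"
    by (simp add: add_ac)
qed

lemma chains_below_interval_series:
  assumes K: "simplicial_complex K" and x: "(A, B) \<in> int_poset K"
  shows "fps_X_geom * (\<Sum>C\<in>order_complex (strictly_below (int_poset K) int_le (A, B)) int_le. fps_X_geom ^ card C)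
    = fps_X * odd_power_series (card (B - A))"
  using x
proof (induction "card (B - A)" arbitrary: A B rule: less_induct)
  case less
  let ?P = "int_poset K"
  let ?D = "strictly_below ?P int_le (A, B)"
  have AB: "A \<subseteq> B" "B \<in> K" using less.prems by (auto simp: int_poset_def)
  have fin_B: "finite B" using simplicial_complex_finite_face[OF K AB(2)] .
  have D: "?D = subintervals A B - {(A, B)}" by (rule strictly_below_int_poset[OF K less.prems])
  have fin_D: "finite ?D" unfolding D using finite_subintervals[OF fin_B] by simp
  have "(\<Sum>y\<in>?D. fps_X_geom * (\<Sum>C\<in>order_complex (strictly_below ?D int_le y) int_le. fps_X_geom ^ card C))
      = (\<Sum>(A', B')\<in>?D. fps_X * odd_power_series (card (B' - A')))"
  proof (intro sum.cong refl, clarify)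
    fix A' B' assume y: "(A', B') \<in> ?D"
    then have "(A', B') \<in> ?P" by (simp add: strictly_below_def)
    moreover have "card (B' - A') < card (B - A)"
      using y card_diff_proper_subinterval[OF _ fin_B] unfolding D by blast
    ultimately show "fps_X_geom * (\<Sum>C\<in>order_complex (strictly_below ?D int_le (A', B')) int_le. fps_X_geom ^ card C)
        = fps_X * odd_power_series (card (B' - A'))"
      using less.hyps int_le.strictly_below_strictly_below[OF y] by simp
  qed
  also have "\<dots> = fps_X * ((\<Sum>(A', B')\<in>subintervals A B. odd_power_series (card (B' - A')))
      - odd_power_series (card (B - A)))"
    using finite_subintervals[OF fin_B] AB(1) unfolding D
    by (simp add: sum_diff1 subintervals_def sum_distrib_left right_diff_distrib case_prod_beta)
  also have "\<dots> = fps_X * (Abs_fps (\<lambda>q. (2 * int q + 3) ^ card (B - A)) - odd_power_series (card (B - A)))"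
    by (simp only: sum_subintervals_odd_power_series[OF fin_B AB(1)])
  finally have "(\<Sum>C\<in>order_complex ?D int_le. fps_X_geom ^ card C)
      = 1 + fps_X * (Abs_fps (\<lambda>q. (2 * int q + 3) ^ card (B - A)) - odd_power_series (card (B - A)))"
    using int_le.order_complex_sum_power[OF fin_D, of fps_X_geom] by simp
  then have "(\<Sum>C\<in>order_complex ?D int_le. fps_X_geom ^ card C) = (1 - fps_X) * odd_power_series (card (B - A))"
    using fps_X_mult_shifted_odd_power_series by (simp add: algebra_simps)
  then show ?case
    using fps_X_geom_mult_one_minus_X by (simp add: mult.assoc[symmetric])
qed

lemma int_poset_eq_image: "int_poset K = (\<lambda>(B, A). (A, B)) ` Sigma K (\<lambda>B. Pow B - {{}})"
  unfolding int_poset_def by auto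

lemma finite_int_poset: "simplicial_complex K \<Longrightarrow> finite (int_poset K)"
  unfolding int_poset_eq_image by (auto simp: simplicial_complex_def)

lemma sum_int_poset_odd_power_series:
  assumes K: "simplicial_complex K"
  shows "(\<Sum>(A, B)\<in>int_poset K. odd_power_series (card (B - A)))
    = Abs_fps (\<lambda>q. \<Sum>B\<in>K. (2 * int q + 2) ^ card B - (2 * int q + 1) ^ card B)"
proof (rule fps_ext)
  fix q
  let ?c = "2 * int q + 1"
  have fin_K: "finite K" using K by (simp add: simplicial_complex_def)
  have "(\<Sum>(A, B)\<in>int_poset K. odd_power_series (card (B - A))) $ q
      = (\<Sum>(B, A)\<in>Sigma K (\<lambda>B. Pow B - {{}}). ?c ^ card (B - A))"
    unfolding int_poset_eq_image by (subst sum.reindex) (auto simp: inj_on_def case_prod_beta fps_sum_nth odd_power_series_def)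
  also have "\<dots> = (\<Sum>B\<in>K. \<Sum>A\<in>Pow B - {{}}. ?c ^ card (B - A))"
    by (rule sum.Sigma[symmetric]) (use fin_K simplicial_complex_finite_face[OF K] in auto)
  also have "\<dots> = (\<Sum>B\<in>K. (2 * int q + 2) ^ card B - (2 * int q + 1) ^ card B)"
  proof (rule sum.cong[OF refl])
    fix B assume "B \<in> K"
    then have fin_B: "finite B" by (rule simplicial_complex_finite_face[OF K])
    then have "(\<Sum>A\<in>Pow B - {{}}. ?c ^ card (B - A)) = (1 + ?c) ^ card B - ?c ^ card B"
      by (simp add: sum_diff1 sum_Pow_power_card_diff)
    then show "(\<Sum>A\<in>Pow B - {{}}. ?c ^ card (B - A)) = (2 * int q + 2) ^ card B - (2 * int q + 1) ^ card B"
      by (simp add: add_ac)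
  qed
  finally show "(\<Sum>(A, B)\<in>int_poset K. odd_power_series (card (B - A))) $ q
      = Abs_fps (\<lambda>q. \<Sum>B\<in>K. (2 * int q + 2) ^ card B - (2 * int q + 1) ^ card B) $ q"
    by simp
qed

lemma Int_complex_chain_series:
  assumes K: "simplicial_complex K"
  shows "(\<Sum>C\<in>Int_complex K. fps_X_geom ^ card C)
    = 1 + fps_X * Abs_fps (\<lambda>q. \<Sum>B\<in>K. (2 * int q + 2) ^ card B - (2 * int q + 1) ^ card B)"
proof -
  have "(\<Sum>C\<in>Int_complex K. fps_X_geom ^ card C)
      = 1 + (\<Sum>x\<in>int_poset K. fps_X_geom *
          (\<Sum>C\<in>order_complex (strictly_below (int_poset K) int_le x) int_le. fps_X_geom ^ card C))"
    unfolding Int_complex_def by (rule int_le.order_complex_sum_power[OF finite_int_poset[OF K]])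
  also have "\<dots> = 1 + (\<Sum>(A, B)\<in>int_poset K. fps_X * odd_power_series (card (B - A)))"
    by (intro arg_cong2[where f = "(+)"] sum.cong refl) (auto simp: chains_below_interval_series[OF K])
  finally show ?thesis
    by (simp add: sum_distrib_left[symmetric] case_prod_beta sum_int_poset_odd_power_series[OF K, unfolded case_prod_beta])
qed

section \<open>The h-polynomial as a series\<close>

lemma fps_of_poly_one_minus_X: "fps_of_poly [:1, -1:] = (1 - fps_X :: int fps)"
proof -
  have "fps_of_poly [:1, -1::int:] = fps_const 1 + fps_of_poly [:-1:] * fps_X"
    by (rule fps_of_poly_pCons)
  also have "fps_of_poly [:-1::int:] = - 1" by (simp add: fps_of_poly_const)
  finally show ?thesis by simp
qed

lemma h_poly_term_series:
  assumes "k \<le> n"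
  shows "fps_of_poly (monom 1 k * [:1, -1:] ^ (n - k)) * fps_geom ^ n = (fps_X_geom :: int fps) ^ k"
proof -
  have "fps_geom ^ n = fps_geom ^ k * fps_geom ^ (n - k)" using assms by (simp add: power_add[symmetric])
  then have "fps_of_poly (monom 1 k * [:1, -1:] ^ (n - k)) * fps_geom ^ n = fps_X ^ k * fps_geom ^ k * ((1 - fps_X) * fps_geom) ^ (n - k)"
    by (simp add: fps_of_poly_mult fps_of_poly_power fps_of_poly_one_minus_X fps_of_poly_monom' power_mult_distrib mult_ac)
  also have "\<dots> = fps_X_geom ^ k" by (simp add: one_minus_X_mult_geom fps_X_geom_def power_mult_distrib)
  finally show ?thesis .
qed

lemma h_poly_series:
  assumes "\<And>F. F \<in> L \<Longrightarrow> card F \<le> n"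
  shows "fps_of_poly (h_poly n L) * fps_geom ^ n = (\<Sum>F\<in>L. fps_X_geom ^ card F)"
  unfolding h_poly_def fps_of_poly_sum sum_distrib_right
  by (rule sum.cong) (auto intro!: h_poly_term_series assms)

lemma geom_power_mult_one_minus_X_power: "fps_geom ^ n * (1 - fps_X) ^ n = 1"
  using one_minus_X_mult_geom by (simp add: power_mult_distrib[symmetric] mult.commute)

text \<open>\<open>homog n p x = (x + 1)\<^sup>n p(x / (x + 1))\<close>, which turns \<open>h\<close>- into \<open>f\<close>-polynomials.\<close>

definition homog :: "nat \<Rightarrow> int poly \<Rightarrow> int \<Rightarrow> int" where
  "homog n p x = (\<Sum>j\<le>n. coeff p j * x ^ j * (x + 1) ^ (n - j))"

lemma homog_diff: "homog n (p - q) x = homog n p x - homog n q x"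
  unfolding homog_def by (simp add: algebra_simps sum_subtractf)

lemma homog_sum: "homog n (\<Sum>F\<in>A. p F) x = (\<Sum>F\<in>A. homog n (p F) x)"
  unfolding homog_def coeff_sum by (simp add: sum_distrib_right sum.swap[of _ A])

lemma homog_Suc:
  assumes "degree p \<le> d"
  shows "homog (Suc d) p x = (x + 1) * homog d p x"
proof -
  have "homog (Suc d) p x = (\<Sum>j\<le>d. coeff p j * x ^ j * (x + 1) ^ (Suc d - j)) + coeff p (Suc d) * x ^ Suc d"
    unfolding homog_def by simp
  also have "coeff p (Suc d) = 0" using assms by (simp add: coeff_eq_0)
  also have "(\<Sum>j\<le>d. coeff p j * x ^ j * (x + 1) ^ (Suc d - j)) = (x + 1) * homog d p x"
    unfolding homog_def sum_distrib_left by (rule sum.cong) (auto simp: Suc_diff_le)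
  finally show ?thesis by simp
qed

lemma degree_h_poly_term: "degree (monom (1::int) m * [:1, -1:] ^ k) \<le> m + k"
proof -
  have "degree (monom (1::int) m * [:1, -1:] ^ k) \<le> degree (monom (1::int) m) + degree ([:1, -1::int:] ^ k)"
    by (rule degree_mult_le)
  also have "degree ([:1, -1:] ^ k :: int poly) \<le> degree [:1, -1::int:] * k" by (rule degree_power_le)
  finally show ?thesis using degree_monom_le[of "1::int" m] by simp
qed

lemma homog_h_poly_term: "homog (m + k) (monom 1 m * [:1, -1:] ^ k) x = x ^ m"
proof (induction k arbitrary: m)
  case 0
  have "homog m (monom 1 m) x = (\<Sum>j\<le>m. (if j = m then x ^ m else 0))"
    unfolding homog_def by (rule sum.cong) (auto simp: coeff_monom)
  then show ?case by simp
next
  case (Suc k)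
  have e: "monom (1::int) m * [:1, -1:] ^ Suc k = monom 1 m * [:1, -1:] ^ k - monom 1 (Suc m) * [:1, -1:] ^ k"
  proof -
    have "monom (1::int) m * [:1, -1:] = monom 1 m - monom 1 (Suc m)"
    proof -
      have e: "[:1, -1::int:] = 1 - monom 1 1" by (simp add: monom_Suc one_pCons)
      have "monom (1::int) m * (1 - monom 1 1) = monom 1 m - monom 1 m * monom 1 1"
        by (simp only: right_diff_distrib mult_1_right)
      also have "monom (1::int) m * monom 1 1 = monom 1 (Suc m)" by (simp add: mult_monom)
      finally show ?thesis unfolding e .
    qed
    moreover have "monom (1::int) m * [:1, -1:] ^ Suc k = (monom 1 m * [:1, -1:]) * [:1, -1:] ^ k"
      by (simp only: power_Suc mult.assoc)
    ultimately have "monom (1::int) m * [:1, -1:] ^ Suc k = (monom 1 m - monom 1 (Suc m)) * [:1, -1:] ^ k"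
      by simp
    then show ?thesis by (simp add: algebra_simps)
  qed
  have "homog (m + Suc k) (monom 1 m * [:1, -1:] ^ Suc k) x
      = homog (Suc (m + k)) (monom 1 m * [:1, -1:] ^ k) x - homog (Suc m + k) (monom 1 (Suc m) * [:1, -1:] ^ k) x"
    unfolding e homog_diff by simp
  also have "homog (Suc (m + k)) (monom 1 m * [:1, -1:] ^ k) x = (x + 1) * x ^ m"
    using homog_Suc[OF degree_h_poly_term[of m k]] Suc.IH[of m] by simp
  also have "homog (Suc m + k) (monom 1 (Suc m) * [:1, -1:] ^ k) x = x ^ Suc m" by (rule Suc.IH)
  finally show ?case by (simp add: algebra_simps)
qed

lemma homog_h_poly:
  assumes "\<And>F. F \<in> L \<Longrightarrow> card F \<le> n"
  shows "homog n (h_poly n L) x = (\<Sum>F\<in>L. x ^ card F)"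
  unfolding h_poly_def homog_sum
proof (rule sum.cong)
  fix F assume "F \<in> L"
  then have "card F + (n - card F) = n" using assms by simp
  then show "homog n (monom 1 (card F) * [:1, -1:] ^ (n - card F)) x = x ^ card F"
    using homog_h_poly_term[of "card F" "n - card F" x] by simp
qed simp

lemma coeff_h_poly_0:
  assumes K: "simplicial_complex K"
  shows "coeff (h_poly n K) 0 = 1"
proof -
  have "coeff (h_poly n K) 0 = (\<Sum>F\<in>K. if card F = 0 then 1 else 0)"
    unfolding h_poly_def coeff_sum coeff_monom_mult by (rule sum.cong) (auto simp: coeff_0_power)
  also have "\<dots> = (\<Sum>F\<in>{{}}. 1)"
  proof -
    have finK: "finite K" using K by (simp add: simplicial_complex_def)
    have "{F\<in>K. card F = 0} = {{}}" using K by (auto simp: simplicial_complex_def)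
    then show ?thesis using finK by (simp add: sum.inter_filter[symmetric])
  qed
  finally show ?thesis by simp
qed

section \<open>The h-polynomial of the interval complex\<close>

lemma fps_of_poly_mult_geom_power_cancel:
  assumes "fps_of_poly p * fps_geom ^ n = fps_of_poly q * fps_geom ^ n"
  shows "p = q"
proof -
  have "fps_of_poly p = fps_of_poly p * (fps_geom ^ n * (1 - fps_X) ^ n)"
    by (simp add: geom_power_mult_one_minus_X_power)
  also have "\<dots> = fps_of_poly q * (fps_geom ^ n * (1 - fps_X) ^ n)"
    using assms by (simp add: mult.assoc[symmetric])
  finally show ?thesis by (simp add: geom_power_mult_one_minus_X_power fps_of_poly_eq_iff)
qed

lemma h_poly_Int_complex_series:
  assumes K: "simplicial_complex K" "Max (card ` K) = n"
  shows "fps_of_poly (h_poly n (Int_complex K)) * fps_geom ^ n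
    = 1 + fps_X * Abs_fps (\<lambda>q. \<Sum>B\<in>K. (2 * int q + 2) ^ card B - (2 * int q + 1) ^ card B)"
  using h_poly_series[of "Int_complex K" n] card_Int_complex_face_le[OF K] Int_complex_chain_series[OF K(1)]
  by simp

lemma Bplus_combination_series_nth:
  fixes h :: "int poly"
  shows "(fps_of_poly (\<Sum>j\<le>n. smult (coeff h j) (Bplus (n + 1) (j + 1))) * fps_geom ^ n) $ q
    = (if q = 0 then coeff h 0 else homog n h (2 * int q) - homog n h (2 * int q - 1))"
proof -
  have "Bfirst_series (n + 1) (int (j + 1)) $ q = closed_pos (n + 1) (j + 1) q" if "j \<le> n" for j
  proof -
    have "\<forall>j\<in>{1..n + 1}. \<forall>q. Bfirst_series (n + 1) (int j) $ q = closed_pos (n + 1) j q"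
      by (rule conjunct1[OF Bfirst_series_nth]) simp
    moreover have "j + 1 \<in> {1..n + 1}" using that by simp
    ultimately show ?thesis by blast
  qed
  then have "(fps_of_poly (\<Sum>j\<le>n. smult (coeff h j) (Bplus (n + 1) (j + 1))) * fps_geom ^ n) $ q
      = (\<Sum>j\<le>n. coeff h j * closed_pos (n + 1) (j + 1) q)"
    by (simp add: fps_of_poly_sum sum_distrib_right fps_sum_nth fps_of_poly_smult Bfirst_series_def
        Bplus_eq_Bfirst mult.assoc)
  also have "\<dots> = (if q = 0 then coeff h 0 else homog n h (2 * int q) - homog n h (2 * int q - 1))"
  proof (cases "q = 0")
    case True
    have "(\<Sum>j\<le>n. coeff h j * closed_pos (n + 1) (j + 1) 0) = (\<Sum>j\<le>n. if j = 0 then coeff h j else 0)"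
      by (rule sum.cong) (simp_all add: closed_pos_def)
    then show ?thesis using True by simp
  qed (auto simp: closed_pos_def homog_def sum_subtractf[symmetric] algebra_simps intro!: sum.cong)
  finally show ?thesis .
qed

theorem h_poly_Int_complex:
  assumes K: "simplicial_complex K" "Max (card ` K) = n"
  shows "h_poly n (Int_complex K) = (\<Sum>j\<le>n. smult (coeff (h_poly n K) j) (Bplus (n + 1) (j + 1)))"
proof (rule fps_of_poly_mult_geom_power_cancel, rule fps_ext)
  fix q
  have faces: "\<And>F. F \<in> K \<Longrightarrow> card F \<le> n" using card_face_le_Max[OF K] by blast
  show "(fps_of_poly (h_poly n (Int_complex K)) * fps_geom ^ n) $ q
      = (fps_of_poly (\<Sum>j\<le>n. smult (coeff (h_poly n K) j) (Bplus (n + 1) (j + 1))) * fps_geom ^ n) $ q"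
    unfolding h_poly_Int_complex_series[OF K] Bplus_combination_series_nth
    using coeff_h_poly_0[OF K(1)] homog_h_poly[OF faces]
    by (cases q) (simp_all add: sum_subtractf algebra_simps)
qed

lemma sum_atMost_fold:
  fixes f :: "nat \<Rightarrow> 'b :: comm_monoid_add"
  shows "(\<Sum>j\<le>n. f j) = (\<Sum>j\<le>n div 2. if 2 * j \<noteq> n then f j + f (n - j) else f j)"
proof -
  have split: "{..n} = {..n div 2} \<union> {n div 2<..n}" by auto
  have "(\<Sum>j\<le>n. f j) = (\<Sum>j\<le>n div 2. f j) + (\<Sum>j\<in>{n div 2<..n}. f j)"
    unfolding split by (rule sum.union_disjoint) auto
  also have "(\<Sum>j\<in>{n div 2<..n}. f j) = (\<Sum>j\<in>{j \<in> {..n div 2}. 2 * j \<noteq> n}. f (n - j))"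
  proof (rule sum.reindex_bij_witness[where i = "\<lambda>j. n - j" and j = "\<lambda>j. n - j"])
    fix a assume "a \<in> {j \<in> {..n div 2}. 2 * j \<noteq> n}"
    then have "a \<le> n" "n div 2 < n - a" by auto
    then show "n - (n - a) = a" "n - a \<in> {n div 2<..n}" by auto
  next
    fix a assume a: "a \<in> {n div 2<..n}"
    then have "n - a \<le> n div 2" "2 * (n - a) \<noteq> n" by auto
    then show "n - (n - a) = a" "n - a \<in> {j \<in> {..n div 2}. 2 * j \<noteq> n}" "f (n - (n - a)) = f a"
      using a by auto
  qed
  also have "\<dots> = (\<Sum>j\<le>n div 2. if 2 * j \<noteq> n then f (n - j) else 0)"
    by (rule sum.inter_filter) simp
  finally show ?thesis by (simp add: sum.distrib[symmetric] if_distrib[of "(+) _"] cong: if_cong)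
qed

theorem h_poly_Int_complex_folded:
  assumes K: "simplicial_complex K" "Max (card ` K) = n"
    and sym: "\<forall>i\<le>n. coeff (h_poly n K) i = coeff (h_poly n K) (n - i)"
  shows "h_poly n (Int_complex K) = (\<Sum>j\<le>n div 2. smult (coeff (h_poly n K) j) (BBplus (n + 1) (j + 1)))"
proof -
  let ?h = "\<lambda>j. coeff (h_poly n K) j"
  have "h_poly n (Int_complex K) = (\<Sum>j\<le>n div 2. if 2 * j \<noteq> n
      then smult (?h j) (Bplus (n + 1) (j + 1)) + smult (?h (n - j)) (Bplus (n + 1) (n - j + 1))
      else smult (?h j) (Bplus (n + 1) (j + 1)))"
    unfolding h_poly_Int_complex[OF K] sum_atMost_fold[of _ n] by simp
  also have "\<dots> = (\<Sum>j\<le>n div 2. smult (?h j) (BBplus (n + 1) (j + 1)))"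
  proof (rule sum.cong[OF refl])
    fix j assume "j \<in> {..n div 2}"
    then have j: "j \<le> n" by simp
    with sym have "?h j = ?h (n - j)" by blast
    then have "?h (n - j) = ?h j" by (rule HOL.sym)
    moreover have "n + 1 - (j + 1) + 1 = n - j + 1" using j by simp
    ultimately show "(if 2 * j \<noteq> n
        then smult (?h j) (Bplus (n + 1) (j + 1)) + smult (?h (n - j)) (Bplus (n + 1) (n - j + 1))
        else smult (?h j) (Bplus (n + 1) (j + 1))) = smult (?h j) (BBplus (n + 1) (j + 1))"
      by (simp add: BBplus_def smult_add_right)
  qed
  finally show ?thesis .
qed

section \<open>Gamma vectors\<close>

definition gamma_basis :: "nat \<Rightarrow> nat \<Rightarrow> 'a::comm_semiring_1 poly" where
  "gamma_basis d i = monom 1 i * [:1, 1:] ^ (d - 2 * i)"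

definition has_gamma_vector :: "nat \<Rightarrow> 'a::comm_semiring_1 poly \<Rightarrow> (nat \<Rightarrow> 'a) \<Rightarrow> bool" where
  "has_gamma_vector d p g \<longleftrightarrow>
     (\<forall>i > d div 2. g i = 0) \<and> p = (\<Sum>i\<le>d div 2. smult (g i) (gamma_basis d i))"

lemma coeff_gamma_basis_below: "i < k \<Longrightarrow> coeff (gamma_basis d k) i = 0"
  by (simp add: gamma_basis_def coeff_monom_mult)

lemma coeff_gamma_basis_self: "coeff (gamma_basis d k) k = 1"
  by (simp add: gamma_basis_def coeff_monom_mult coeff_0_power)

text \<open>The basis is triangular: \<open>gamma_basis d k\<close> starts with \<open>t\<^sup>k\<close>.\<close>

lemma has_gamma_vector_unique:
  fixes p :: "'a::comm_ring_1 poly"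
  assumes "has_gamma_vector d p g" "has_gamma_vector d p g'"
  shows "g = g'"
proof -
  let ?D = "d div 2"
  let ?\<delta> = "\<lambda>i. g i - g' i"
  have zero: "(\<Sum>i\<le>?D. smult (?\<delta> i) (gamma_basis d i)) = 0"
    using assms unfolding has_gamma_vector_def by (simp add: smult_diff_left sum_subtractf)
  have "?\<delta> i = 0" if "i \<le> ?D" for i
    using that
  proof (induction i rule: less_induct)
    case (less i)
    have "0 = (\<Sum>k\<le>?D. ?\<delta> k * coeff (gamma_basis d k) i)"
      using arg_cong[OF zero, of "\<lambda>p. coeff p i"] by (simp add: coeff_sum)
    also have "\<dots> = (\<Sum>k\<le>?D. if k = i then ?\<delta> i else 0)"
    proof (rule sum.cong[OF refl])
      fix k
      consider "k < i" | "k = i" | "i < k" by linarith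
      then show "?\<delta> k * coeff (gamma_basis d k) i = (if k = i then ?\<delta> i else 0)"
        by cases (use less.IH less.prems in \<open>auto simp: coeff_gamma_basis_self coeff_gamma_basis_below\<close>)
    qed
    also have "\<dots> = ?\<delta> i" using less.prems by simp
    finally show ?case by simp
  qed
  moreover have "?\<delta> i = 0" if "i > ?D" for i using assms that unfolding has_gamma_vector_def by auto
  ultimately show ?thesis by (metis eq_iff_diff_eq_0 ext not_le)
qed

lemma gamma_vec_eqI: "has_gamma_vector d p g \<Longrightarrow> gamma_vec d p = g"
  unfolding gamma_vec_def
  by (rule the_equality) (auto simp: has_gamma_vector_def gamma_basis_def
      intro: has_gamma_vector_unique[unfolded has_gamma_vector_def gamma_basis_def])

lemma smult_sum_right: "smult c (\<Sum>x\<in>A. f x) = (\<Sum>x\<in>A. smult c (f x))"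
  by (induction A rule: infinite_finite_induct) (simp_all add: smult_add_right)

lemma has_gamma_vector_sum:
  fixes c :: "'b \<Rightarrow> 'a::comm_semiring_1"
  assumes "\<And>j. j \<in> A \<Longrightarrow> has_gamma_vector d (Q j) (g j)"
  shows "has_gamma_vector d (\<Sum>j\<in>A. smult (c j) (Q j)) (\<lambda>k. \<Sum>j\<in>A. c j * g j k)"
proof -
  have "(\<Sum>j\<in>A. smult (c j) (Q j)) = (\<Sum>j\<in>A. \<Sum>i\<le>d div 2. smult (c j * g j i) (gamma_basis d i))"
    using assms unfolding has_gamma_vector_def by (simp add: smult_sum_right smult_smult)
  also have "\<dots> = (\<Sum>i\<le>d div 2. smult (\<Sum>j\<in>A. c j * g j i) (gamma_basis d i))"
    by (subst sum.swap) (simp add: smult_sum)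
  finally show ?thesis using assms unfolding has_gamma_vector_def by simp
qed

lemma palindromic_binomial: "palindromic d ([:1, 1:] ^ d :: 'a::comm_semiring_1 poly)"
  unfolding palindromic_def
proof (rule poly_eqI)
  fix i
  have "degree ([:1, 1:] ^ d :: 'a poly) \<le> d" using degree_power_le[of "[:1, 1:] :: 'a poly" d] by simp
  moreover have "d choose (d - i) = d choose i" if "i \<le> d" using binomial_symmetric[OF that] by simp
  ultimately show "coeff (reflect_at d ([:1, 1:] ^ d)) i = coeff ([:1, 1:] ^ d :: 'a poly) i"
    by (cases "i \<le> d") (auto simp: coeff_reflect_at coeff_linear_poly_power coeff_eq_0)
qed

lemma palindromic_iff_coeff:
  "palindromic d p \<longleftrightarrow> (\<forall>i. coeff p i = (if i \<le> d then coeff p (d - i) else 0))"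
  unfolding palindromic_def poly_eq_iff coeff_reflect_at by (simp only: eq_commute)

lemma palindromic_pCons_0:
  assumes "palindromic d (pCons 0 q)"
  shows "d < 2 \<Longrightarrow> q = 0" and "palindromic (d - 2) q"
proof -
  have c: "coeff q k = (if Suc k \<le> d then coeff (pCons 0 q) (d - Suc k) else 0)" for k
  proof -
    have "coeff (pCons 0 q) (Suc k) = (if Suc k \<le> d then coeff (pCons 0 q) (d - Suc k) else 0)"
      using assms unfolding palindromic_iff_coeff by blast
    then show ?thesis by (simp only: coeff_pCons_Suc)
  qed
  show small: "q = 0" if "d < 2"
  proof (rule poly_eqI)
    fix k
    show "coeff q k = coeff 0 k" using c[of k] that by (cases "Suc k \<le> d") auto
  qed
  show "palindromic (d - 2) q"
  proof (cases "d < 2")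
    case False
    have "coeff q k = (if k \<le> d - 2 then coeff q (d - 2 - k) else 0)" for k
    proof (cases "k \<le> d - 2")
      case True
      then have "Suc k \<le> d" "d - Suc k = Suc (d - 2 - k)" using False by simp_all
      then show ?thesis using c[of k] True by simp
    next
      case k: False
      show ?thesis
      proof (cases "Suc k \<le> d")
        case True
        then have "d - Suc k = 0" using k by simp
        then show ?thesis using c[of k] k True by simp
      qed (use c[of k] k in simp)
    qed
    then show ?thesis unfolding palindromic_iff_coeff ..
  qed (simp add: small palindromic_def)
qed

lemma has_gamma_vector_exists:
  fixes p :: "'a::comm_ring_1 poly"
  assumes "palindromic d p"
  shows "\<exists>g. has_gamma_vector d p g"
  using assms
proof (induction d arbitrary: p rule: less_induct)
  case (less d)
  define c where "c = coeff p 0"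
  have "palindromic d (p - smult c ([:1, 1:] ^ d))"
    using less.prems palindromic_binomial[of d, where 'a = 'a]
    by (simp add: palindromic_def reflect_at_diff reflect_at_smult)
  moreover have "coeff (p - smult c ([:1, 1:] ^ d)) 0 = 0" by (simp add: c_def coeff_0_power)
  ultimately obtain q where q: "p - smult c ([:1, 1:] ^ d) = pCons 0 q" and pal: "palindromic d (pCons 0 q)"
    by (metis pCons_cases coeff_pCons_0)
  then have p_eq: "p = smult c (gamma_basis d 0) + pCons 0 q"
    by (simp add: gamma_basis_def algebra_simps)
  show ?case
  proof (cases "d < 2")
    case True
    then have "has_gamma_vector d p (\<lambda>i. if i = 0 then c else 0)"
      using palindromic_pCons_0(1)[OF pal True] p_eq by (auto simp: has_gamma_vector_def)
    then show ?thesis by blast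
  next
    case False
    then obtain g' where g': "has_gamma_vector (d - 2) q g'"
      using less.IH[of "d - 2" q] palindromic_pCons_0(2)[OF pal] by auto
    have d: "d div 2 = Suc ((d - 2) div 2)" using False by presburger
    have shift: "monom 1 1 * gamma_basis (d - 2) i = gamma_basis d (Suc i)" for i :: nat
      using False by (simp add: gamma_basis_def monom_Suc pCons_0_eq_monom_mult[symmetric] algebra_simps)
    have "pCons 0 q = (\<Sum>i\<le>(d - 2) div 2. smult (g' i) (gamma_basis d (Suc i)))"
      using g' unfolding has_gamma_vector_def pCons_0_eq_monom_mult
      by (simp add: sum_distrib_left shift[symmetric])
    then have "has_gamma_vector d p (\<lambda>i. if i = 0 then c else g' (i - 1))"
      using g' p_eq unfolding has_gamma_vector_def d sum.atMost_Suc_shift by auto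
    then show ?thesis by blast
  qed
qed

lemma gamma_vec_sum:
  assumes "finite A" and "\<And>j. j \<in> A \<Longrightarrow> palindromic d (Q j)"
  shows "gamma_vec d (\<Sum>j\<in>A. smult (c j) (Q j)) = (\<lambda>k. \<Sum>j\<in>A. c j * gamma_vec d (Q j) k)"
proof -
  have "has_gamma_vector d (Q j) (gamma_vec d (Q j))" if "j \<in> A" for j
    using has_gamma_vector_exists[OF assms(2)[OF that]] gamma_vec_eqI by metis
  then show ?thesis by (intro gamma_vec_eqI has_gamma_vector_sum)
qed

theorem proposition4p1:
  fixes K :: "'a set set" and n :: nat
  assumes "simplicial_complex K"
    and "Max (card ` K) = n"
    and "\<forall>i\<le>n. coeff (h_poly n K) i = coeff (h_poly n K) (n - i)"
  shows "(\<forall>r. coeff (h_poly n (Int_complex K)) r =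
              (\<Sum>j\<le>n div 2. coeff (h_poly n K) j * coeff (BBplus (n + 1) (j + 1)) r))
       \<and> h_poly n (Int_complex K) = (\<Sum>j\<le>n div 2. smult (coeff (h_poly n K) j) (BBplus (n + 1) (j + 1)))
       \<and> gamma_vec n (h_poly n (Int_complex K)) =
           (\<lambda>k. \<Sum>j\<le>n div 2. coeff (h_poly n K) j * gamma_vec n (BBplus (n + 1) (j + 1)) k)"
proof -
  have h: "h_poly n (Int_complex K) = (\<Sum>j\<le>n div 2. smult (coeff (h_poly n K) j) (BBplus (n + 1) (j + 1)))"
    by (rule h_poly_Int_complex_folded[OF assms])
  moreover have "palindromic n (BBplus (n + 1) (j + 1))" if "j \<in> {..n div 2}" for j
    using palindromic_BBplus[of "j + 1" "n + 1"] that by simp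
  then have "gamma_vec n (\<Sum>j\<le>n div 2. smult (coeff (h_poly n K) j) (BBplus (n + 1) (j + 1))) =
      (\<lambda>k. \<Sum>j\<le>n div 2. coeff (h_poly n K) j * gamma_vec n (BBplus (n + 1) (j + 1)) k)"
    by (intro gamma_vec_sum) auto
  ultimately show ?thesis by (simp add: coeff_sum)
qed

end
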